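(* Let $d\ge1$ and let $\Omega\subset\mathbb R^d$ be a regular set with $\mu_d(\Omega)>0$. Let $f:\Omega\to\mathbb R$ be bounded and continuous almost everywhere on $\Omega$, with $\mathcal{ER}(f)=[\inf_\Omega f,\sup_\Omega f]$. Take any closed $d$-dimensional rectangle $[\mathbf a,\mathbf b]$ containing $\Omega$, any sequence of $d$-indices $\mathbf n=\mathbf n(n)\in\mathbb N^d$ with $\mathbf n\to\infty$ as $n\to\infty$, and any asymptotically uniform grid $\mathcal G_{\mathbf n}^{(n)}=\{\mathbf x_{\mathbf i,\mathbf n}^{(n)}\}_{\mathbf i=\mathbf 1,\ldots,\mathbf n}$ in $[\mathbf a,\mathbf b]$. For every $n$ define $\mathcal I_{\mathbf n}^{(n)}(\Omega)=\{\mathbf i\in\{\mathbf 1,\ldots,\mathbf n\}:\mathbf x_{\mathbf i,\mathbf n}^{(n)}\in\Omega\}$, consider the multiset of samples $\{f(\mathbf x_{\mathbf i,\mathbf n}^{(n)}):\mathbf i\in\mathcal I_{\mathbf n}^{(n)}(\Omega)\}$ and a multiset of $|\mathcal I_{\mathbf n}^{(n)}(\Omega)|$ real numbers $\{\lambda_{\mathbf i,\mathbf n}^{(n)}:\mathbf i\in\mathcal I_{\mathbf n}^{(n)}(\Omega)\}$ such that: (i) the sequence of multisets $\{\{\lambda_{\mathbf i,\mathbf n}^{(n)}:\mathbf i\in\mathcal I_{\mathbf n}^{(n)}(\Omega)\}\}_n$ has an asymptotic distribution described by $f$; (ii) $\{\lambda_{\mathbf i,\mathbf n}^{(n)}:\mathbf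 i\in\mathcal I_{\mathbf n}^{(n)}(\Omega)\}\subseteq[\inf_\Omega f-\epsilon_n,\sup_\Omega f+\epsilon_n]$ for every $n$, for some sequence $\epsilon_n\to0$. Then, if $\sigma_n$ and $\tau_n$ are permutations of $\mathcal I_{\mathbf n}^{(n)}(\Omega)$ such that the vectors $[f(\mathbf x_{\sigma_n(\mathbf i),\mathbf n}^{(n)})]_{\mathbf i\in\mathcal I_{\mathbf n}^{(n)}(\Omega)}$ and $[\lambda_{\tau_n(\mathbf i),\mathbf n}^{(n)}]_{\mathbf i\in\mathcal I_{\mathbf n}^{(n)}(\Omega)}$ are sorted in increasing order (indices $\mathbf i$ taken in lexicographic order), we have $$\max_{\mathbf i\in\mathcal I_{\mathbf n}^{(n)}(\Omega)}|f(\mathbf x_{\sigma_n(\mathbf i),\mathbf n}^{(n)})-\lambda_{\tau_n(\mathbf i),\mathbf n}^{(n)}|\to0\quad(n\to\infty).$$ In particular, $\min_\tau\max_{\mathbf i\in\mathcal I_{\mathbf n}^{(n)}(\Omega)}|f(\mathbf x_{\mathbf i,\mathbf n}^{(n)})-\lambda_{\tau(\mathbf i),\mathbf n}^{(n)}|\to0$ as $n\to\infty$, where the minimum is over all permutations $\tau$ of $\mathcal I_{\mathbf n}^{(n)}(\Omega)$.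
   Context: $\mu_d$ is Lebesgue measure on $\mathbb R^d$. A set $\Omega\subset\mathbb R^d$ is regular if it is bounded and $\mu_d(\partial\Omega)=0$. For measurable $f:\Omega\to\mathbb C$, the essential range is $\mathcal{ER}(f)=\{z\in\mathbb C:\mu_d\{\mathbf x\in\Omega: |f(\mathbf x)-z|<\epsilon\}>0\ \forall\epsilon>0\}$. Multi-index notation: for $\mathbf n\in\mathbb N^d$, $\mathbf n\to\infty$ means $\min_j n_j\to\infty$; $\{\mathbf 1,\ldots,\mathbf n\}=\{\mathbf i\in\mathbb Z^d:\mathbf 1\le\mathbf i\le\mathbf n\}$ componentwise, ordered lexicographically; operations like $\mathbf i(\mathbf b-\mathbf a)/\mathbf n$ are componentwise. A family $\mathcal G_{\mathbf n}^{(n)}=\{\mathbf x_{\mathbf i,\mathbf n}^{(n)}\}_{\mathbf i=\mathbf 1,\ldots,\mathbf n}$ of points in $\mathbb R^d$ (not necessarily inside $[\mathbf a,\mathbf b]$) is an asymptotically uniform (a.u.) grid in $[\mathbf a,\mathbf b]$ if $\max_{\mathbf i=\mathbf 1,\ldots,\mathbf n}\|\mathbf x_{\mathbf i,\mathbf n}^{(n)}-(\mathbf a+\mathbf i(\mathbf b-\mathbf a)/\mathbf n)\|_\infty\to0$ as $n\to\infty$. A sequence of finite multisets of numbers $\{\Lambda_n=\{\lambda_{1,n},\ldots,\lambda_{d_n,n}\}\}_n$ with $d_n\to\infty$ has an asymptotic distribution described by a measurable $f:\Omega\subset\mathbb R^d\to\mathbb C$ with $0<\mu_d(\Omega)<\infty$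 if $\lim_{n\to\infty}\frac1{d_n}\sum_{i=1}^{d_n}F(\lambda_{i,n})=\frac1{\mu_d(\Omega)}\int_\Omega F(f(\mathbf x))\,d\mathbf x$ for every continuous $F:\mathbb C\to\mathbb C$ with bounded support. *)

theory Defs
  imports "HOL-Analysis.Analysis"
begin

definition multi_range :: "('d::finite \<Rightarrow> nat) \<Rightarrow> ('d \<Rightarrow> nat) set" where
  "multi_range N = {i. \<forall>k. 1 \<le> i k \<and> i k \<le> N k}"

definition lex_less :: "('d::{finite,wellorder} \<Rightarrow> nat) \<Rightarrow> ('d \<Rightarrow> nat) \<Rightarrow> bool" where
  "lex_less i j \<longleftrightarrow> (\<exists>k. i k < j k \<and> (\<forall>l<k. i l = j l))"

definition unif_point :: "real^'d \<Rightarrow> real^'d \<Rightarrow> ('d::finite \<Rightarrow> nat) \<Rightarrow> ('d \<Rightarrow> nat) \<Rightarrow> real^'d" where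
  "unif_point a b N i = (\<chi> k. a$k + real (i k) * (b$k - a$k) / real (N k))"

definition au_grid :: "(nat \<Rightarrow> ('d::finite \<Rightarrow> nat) \<Rightarrow> real^'d) \<Rightarrow> real^'d \<Rightarrow> real^'d
    \<Rightarrow> (nat \<Rightarrow> ('d \<Rightarrow> nat)) \<Rightarrow> bool" where
  "au_grid x a b N \<longleftrightarrow>
     ((\<lambda>n. Max ({0} \<union> {\<bar>x n i $ k - unif_point a b (N n) i $ k\<bar> | i k. i \<in> multi_range (N n)}))
        \<longlonglongrightarrow> 0)"

definition ess_range :: "('a::euclidean_space) set \<Rightarrow> ('a \<Rightarrow> real) \<Rightarrow> real set" where
  "ess_range \<Omega> f = {z. \<forall>e>0. emeasure lebesgue {x \<in> \<Omega>. \<bar>f x - z\<bar> < e} > 0}"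

definition has_asymp_distr ::
  "(nat \<Rightarrow> 'i set) \<Rightarrow> (nat \<Rightarrow> 'i \<Rightarrow> complex) \<Rightarrow> ('a::euclidean_space \<Rightarrow> complex) \<Rightarrow> 'a set \<Rightarrow> bool" where
  "has_asymp_distr A lam f \<Omega> \<longleftrightarrow>
     (\<forall>n. finite (A n)) \<and> filterlim (\<lambda>n. card (A n)) at_top sequentially \<and>
     (\<forall>F :: complex \<Rightarrow> complex. continuous_on UNIV F \<and> bounded {z. F z \<noteq> 0} \<longrightarrow>
        ((\<lambda>n. (\<Sum>i\<in>A n. F (lam n i)) / of_nat (card (A n)))
           \<longlonglongrightarrow> (set_lebesgue_integral lebesgue \<Omega> (\<lambda>x. F (f x))) / of_real (measure lebesgue \<Omega>)))"

end

theory Submission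
  imports Defs
begin

text \<open>Let \<open>U\<close> be the samples \<open>f (x n i)\<close> and \<open>V\<close> the numbers \<open>lam n i\<close>, \<open>i \<in> I n\<close>, both
  arranged increasingly along the lexicographic order. Both have the asymptotic distribution
  of \<open>f\<close>: for \<open>V\<close> this is the hypothesis, for \<open>U\<close> it follows from the convergence of
  Riemann sums of the almost everywhere continuous functions \<open>1\<^bsub>\<Omega>\<^esub> F \<circ> f\<close> on the asymptotically
  uniform grid. Since the essential range of \<open>f\<close> is the whole interval \<open>[inf f, sup f]\<close>,
  every subinterval has positive limit mass; testing against trapezoidal functions, for each of
  the finitely many levels \<open>t\<close> of a grid of mesh \<open>\<delta>\<close> eventually
  \<open>#{U \<le> t} \<le> #{V < t + \<delta>}\<close>, and symmetrically. If \<open>V\<^sub>i \<ge> U\<^sub>i + 3\<delta>\<close> at some rank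
  \<open>i\<close>, the common sorting gives \<open>#{V < V\<^sub>i} < #{U \<le> U\<^sub>i}\<close>, which contradicts the count at
  the level just above \<open>U\<^sub>i\<close>. So the sorted matching is eventually \<open>3\<delta>\<close>-close, and the best
  matching over all permutations is no worse.\<close>

section \<open>Lexicographic order and sorting permutations\<close>

lemma lex_less_irrefl: "\<not> lex_less i i"
  unfolding lex_less_def by auto

lemma lex_less_trans:
  assumes "lex_less i j" "lex_less j l"
  shows "lex_less i l"
proof -
  obtain k1 where k1: "i k1 < j k1" "\<forall>q<k1. i q = j q"
    using assms(1) unfolding lex_less_def by blast
  obtain k2 where k2: "j k2 < l k2" "\<forall>q<k2. j q = l q"
    using assms(2) unfolding lex_less_def by blast
  have "i (min k1 k2) < l (min k1 k2)"
    using k1 k2 by (cases k1 k2 rule: linorder_cases) (auto simp: min_def)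
  moreover have "\<forall>q<min k1 k2. i q = l q"
    using k1 k2 by simp
  ultimately show ?thesis
    unfolding lex_less_def by blast
qed

lemma lex_less_total:
  assumes "i \<noteq> j"
  shows "lex_less i j \<or> lex_less j i"
proof -
  define k where "k = (LEAST k. i k \<noteq> j k)"
  have "\<exists>k. i k \<noteq> j k"
    using assms by auto
  then have "i k \<noteq> j k"
    unfolding k_def by (rule LeastI_ex)
  moreover have "\<forall>q<k. i q = j q"
    unfolding k_def using not_less_Least by blast
  ultimately show ?thesis
    unfolding lex_less_def by (metis linorder_neqE_nat)
qed

lemma finite_total_has_greatest:
  assumes "finite I" "I \<noteq> {}"
    and R_trans: "\<And>i j k. R i j \<Longrightarrow> R j k \<Longrightarrow> R i k"
    and R_total: "\<And>i j. i \<in> I \<Longrightarrow> j \<in> I \<Longrightarrow> i \<noteq> j \<Longrightarrow> R i j \<or> R j i"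
  shows "\<exists>r\<in>I. \<forall>i\<in>I. i \<noteq> r \<longrightarrow> R i r"
  using assms(1,2) R_total
proof (induction I rule: finite_ne_induct)
  case (singleton x)
  then show ?case by auto
next
  case (insert x F)
  then obtain r where r: "r \<in> F" "\<forall>i\<in>F. i \<noteq> r \<longrightarrow> R i r"
    by auto
  have "R x r \<or> R r x"
    using insert r by (metis insertCI)
  then show ?case
    using r R_trans by (metis insert_iff)
qed

lemma exists_permutes_sorted:
  fixes w :: "'i \<Rightarrow> 'a::linorder"
  assumes "finite I"
    and R_trans: "\<And>i j k. R i j \<Longrightarrow> R j k \<Longrightarrow> R i k"
    and R_irrefl: "\<And>i. \<not> R i i"
    and R_total: "\<And>i j. i \<in> I \<Longrightarrow> j \<in> I \<Longrightarrow> i \<noteq> j \<Longrightarrow> R i j \<or> R j i"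
  shows "\<exists>\<pi>. \<pi> permutes I \<and> (\<forall>i\<in>I. \<forall>j\<in>I. R i j \<longrightarrow> w (\<pi> i) \<le> w (\<pi> j))"
  using assms(1) R_total
proof (induction "card I" arbitrary: I w)
  case 0
  then show ?case
    by (intro exI[of _ id]) auto
next
  case (Suc c)
  have "I \<noteq> {}"
    using Suc.hyps(2) by auto
  then obtain r where r: "r \<in> I" "\<forall>i\<in>I. i \<noteq> r \<longrightarrow> R i r"
    using finite_total_has_greatest[of I R] Suc.prems R_trans by blast
  have "Max (w ` I) \<in> w ` I"
    using Suc.prems(1) \<open>I \<noteq> {}\<close> by simp
  then obtain q where q: "q \<in> I" "w q = Max (w ` I)"
    by auto
  have q_max: "w i \<le> w q" if "i \<in> I" for i
    unfolding q(2) using Suc.prems(1) that by (intro Max_ge) auto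
  \<comment> \<open>sort the rest by induction, after moving a largest value to the greatest index \<open>r\<close>\<close>
  have "\<exists>\<pi>'. \<pi>' permutes (I - {r}) \<and> (\<forall>i\<in>I - {r}. \<forall>j\<in>I - {r}.
      R i j \<longrightarrow> (w \<circ> Transposition.transpose q r) (\<pi>' i) \<le> (w \<circ> Transposition.transpose q r) (\<pi>' j))"
    by (rule Suc.hyps(1)) (use Suc.hyps(2) Suc.prems r in auto)
  then obtain \<pi>' where \<pi>': "\<pi>' permutes (I - {r})"
    "\<forall>i\<in>I - {r}. \<forall>j\<in>I - {r}. R i j \<longrightarrow> w (Transposition.transpose q r (\<pi>' i)) \<le> w (Transposition.transpose q r (\<pi>' j))"
    by auto
  define \<pi> where "\<pi> = Transposition.transpose q r \<circ> \<pi>'"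
  have "\<pi> permutes I"
    unfolding \<pi>_def using \<pi>'(1) q r
    by (intro permutes_compose permutes_swap_id) (auto intro: permutes_subset)
  moreover have "w (\<pi> i) \<le> w (\<pi> j)" if "i \<in> I" "j \<in> I" "R i j" for i j
  proof (cases "j = r")
    case True
    then have "\<pi> j = q"
      using \<pi>'(1) unfolding \<pi>_def by (simp add: permutes_not_in)
    then show ?thesis
      using q_max \<open>\<pi> permutes I\<close> that(1) by (simp add: permutes_in_image)
  next
    case False
    have "i \<noteq> r"
      using r that False R_trans R_irrefl by blast
    then show ?thesis
      using \<pi>'(2) that False unfolding \<pi>_def by simp
  qed
  ultimately show ?case
    by blast
qed

lemma sorted_card_less_lt_card_le:
  fixes v w :: "'i \<Rightarrow> 'a::linorder"
  assumes "finite I" "i \<in> I"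
    and R_irrefl: "\<And>i. \<not> R i i"
    and R_total: "\<And>i j. i \<in> I \<Longrightarrow> j \<in> I \<Longrightarrow> i \<noteq> j \<Longrightarrow> R i j \<or> R j i"
    and sorted_w: "\<And>i j. i \<in> I \<Longrightarrow> j \<in> I \<Longrightarrow> R i j \<Longrightarrow> w i \<le> w j"
    and sorted_v: "\<And>i j. i \<in> I \<Longrightarrow> j \<in> I \<Longrightarrow> R i j \<Longrightarrow> v i \<le> v j"
  shows "card {j\<in>I. v j < v i} < card {j\<in>I. w j \<le> w i}"
proof -
  have "{j\<in>I. v j < v i} \<subseteq> {j\<in>I. R j i}"
    using assms(2) R_total sorted_v by (auto simp: not_le[symmetric])
  then have "card {j\<in>I. v j < v i} \<le> card {j\<in>I. R j i}"
    using assms(1) by (intro card_mono) auto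
  also have "\<dots> < card (insert i {j\<in>I. R j i})"
    using assms(1) R_irrefl by (subst card_insert_disjoint) auto
  also have "\<dots> \<le> card {j\<in>I. w j \<le> w i}"
    using assms(1,2) sorted_w by (intro card_mono) auto
  finally show ?thesis .
qed

section \<open>Trapezoidal test functions and counting functions\<close>

lemma real_card_filter_le_sum:
  fixes g :: "'a \<Rightarrow> real"
  assumes "finite A"
    and "\<And>x. x \<in> A \<Longrightarrow> P x \<Longrightarrow> 1 \<le> g x" "\<And>x. x \<in> A \<Longrightarrow> 0 \<le> g x"
  shows "real (card {x\<in>A. P x}) \<le> sum g A"
proof -
  have "real (card {x\<in>A. P x}) = (\<Sum>x\<in>A. if P x then 1 else 0)"
    using assms(1) by (simp add: sum.inter_filter[symmetric])
  also have "\<dots> \<le> sum g A"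
    using assms by (intro sum_mono) auto
  finally show ?thesis .
qed

lemma sum_le_real_card_filter:
  fixes g :: "'a \<Rightarrow> real"
  assumes "finite A"
    and "\<And>x. x \<in> A \<Longrightarrow> g x \<le> 1" "\<And>x. x \<in> A \<Longrightarrow> \<not> P x \<Longrightarrow> g x \<le> 0"
  shows "sum g A \<le> real (card {x\<in>A. P x})"
proof -
  have "sum g A \<le> (\<Sum>x\<in>A. if P x then 1 else 0)"
    using assms by (intro sum_mono) auto
  also have "\<dots> = real (card {x\<in>A. P x})"
    using assms(1) by (simp add: sum.inter_filter[symmetric])
  finally show ?thesis .
qed

definition trap :: "real \<Rightarrow> real \<Rightarrow> real \<Rightarrow> real \<Rightarrow> real" where
  "trap lo hi r y = max 0 (min 1 (min ((y - lo + r) / r) ((hi + r - y) / r)))"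

lemma continuous_on_trap: "0 < r \<Longrightarrow> continuous_on UNIV (trap lo hi r)"
  unfolding trap_def by (intro continuous_intros) auto

lemma trap_nonneg: "0 \<le> trap lo hi r y"
  unfolding trap_def by auto

lemma trap_le_one: "trap lo hi r y \<le> 1"
  unfolding trap_def by auto

lemma abs_trap_le_one: "\<bar>trap lo hi r y\<bar> \<le> 1"
  using trap_nonneg trap_le_one by (simp add: abs_le_iff order_trans[OF _ trap_nonneg])

lemma trap_eq_one: "0 < r \<Longrightarrow> lo \<le> y \<Longrightarrow> y \<le> hi \<Longrightarrow> trap lo hi r y = 1"
  unfolding trap_def by (auto simp: field_simps)

lemma trap_eq_zero:
  assumes "0 < r" "y \<le> lo - r \<or> hi + r \<le> y"
  shows "trap lo hi r y = 0"
proof -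
  have "(y - lo + r) / r \<le> 0 \<or> (hi + r - y) / r \<le> 0"
    using assms by (auto simp: divide_nonpos_pos)
  then show ?thesis
    unfolding trap_def by linarith
qed

lemma trap_mono_hi:
  assumes "0 < r" "hi \<le> hi'"
  shows "trap lo hi r y \<le> trap lo hi' r y"
proof -
  have "(hi + r - y) / r \<le> (hi' + r - y) / r"
    using assms by (intro divide_right_mono) auto
  then show ?thesis
    unfolding trap_def by linarith
qed

lemma trap_shift_gap:
  assumes "0 < r" "lo \<le> t" "t + r/2 \<le> y" "y \<le> t + r"
  shows "trap lo t r y + 1/2 \<le> trap lo (t + r) r y"
proof -
  have "trap lo t r y \<le> 1/2"
  proof -
    have "(t + r - y) / r \<le> 1/2"
      using assms by (simp add: field_simps)
    then show ?thesis
      unfolding trap_def by linarith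
  qed
  moreover have "trap lo (t + r) r y = 1"
    using assms by (intro trap_eq_one) auto
  ultimately show ?thesis
    by simp
qed

text \<open>Since \<open>1\<^bsub>[lo, t]\<^esub> \<le> trap lo t r\<close> and \<open>trap lo (t + r) r \<le> 1\<^bsub>(-\<infinity>, t + 2r)\<^esub>\<close>,
  a gap between the limits of the two averages becomes an inequality of counting functions.\<close>
lemma eventually_card_le_card_less:
  fixes W Z :: "nat \<Rightarrow> 'i \<Rightarrow> real"
  assumes fin: "\<And>n. finite (I n)"
    and W_ge: "eventually (\<lambda>n. \<forall>i\<in>I n. lo \<le> W n i) sequentially"
    and W_lim: "(\<lambda>n. (\<Sum>i\<in>I n. trap lo t r (W n i)) / real (card (I n))) \<longlonglongrightarrow> L1"
    and Z_lim: "(\<lambda>n. (\<Sum>i\<in>I n. trap lo (t + r) r (Z n i)) / real (card (I n))) \<longlonglongrightarrow> L2"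
    and "L1 < L2" "0 < r"
  shows "eventually (\<lambda>n. card {i\<in>I n. W n i \<le> t} \<le> card {i\<in>I n. Z n i < t + 2 * r}) sequentially"
proof -
  have "eventually (\<lambda>n. (\<Sum>i\<in>I n. trap lo t r (W n i)) / real (card (I n)) < (L1 + L2) / 2) sequentially"
    using W_lim by (rule order_tendstoD) (use \<open>L1 < L2\<close> in simp)
  moreover have "eventually (\<lambda>n. (L1 + L2) / 2 < (\<Sum>i\<in>I n. trap lo (t + r) r (Z n i)) / real (card (I n))) sequentially"
    using Z_lim by (rule order_tendstoD) (use \<open>L1 < L2\<close> in simp)
  ultimately show ?thesis
    using W_ge
  proof eventually_elim
    case (elim n)
    then have "(\<Sum>i\<in>I n. trap lo t r (W n i)) / real (card (I n))
        < (\<Sum>i\<in>I n. trap lo (t + r) r (Z n i)) / real (card (I n))"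
      by linarith
    then have "(\<Sum>i\<in>I n. trap lo t r (W n i)) < (\<Sum>i\<in>I n. trap lo (t + r) r (Z n i))"
      by (cases "card (I n) = 0") (auto simp: divide_less_cancel)
    moreover have "real (card {i\<in>I n. W n i \<le> t}) \<le> (\<Sum>i\<in>I n. trap lo t r (W n i))"
      using fin elim(3) \<open>0 < r\<close> by (intro real_card_filter_le_sum) (auto simp: trap_eq_one trap_nonneg)
    moreover have "(\<Sum>i\<in>I n. trap lo (t + r) r (Z n i)) \<le> real (card {i\<in>I n. Z n i < t + 2 * r})"
      using fin \<open>0 < r\<close> by (intro sum_le_real_card_filter) (auto simp: trap_le_one trap_eq_zero)
    ultimately show ?case
      by linarith
  qed
qed

lemma exists_nat_step_between:
  fixes c s \<delta> :: real
  assumes "0 < \<delta>" "c \<le> s"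
  shows "\<exists>j::nat. s \<le> c + j * \<delta> \<and> c + j * \<delta> < s + \<delta>"
proof -
  define j where "j = nat \<lceil>(s - c) / \<delta>\<rceil>"
  have "real j = of_int \<lceil>(s - c) / \<delta>\<rceil>"
    unfolding j_def using assms by (simp add: divide_nonneg_pos)
  then have "(s - c) / \<delta> \<le> real j" "real j < (s - c) / \<delta> + 1"
    by linarith+
  then have "s - c \<le> real j * \<delta>" "real j * \<delta> < s - c + \<delta>"
    using assms(1) by (simp_all add: field_simps)
  then show ?thesis
    by (intro exI[of _ j]) auto
qed

lemma sorted_close_of_counts:
  fixes W Z :: "'i \<Rightarrow> real"
  assumes "finite I" "0 < \<delta>" "i \<in> I"
    and R_irrefl: "\<And>i. \<not> R i i"
    and R_total: "\<And>i j. i \<in> I \<Longrightarrow> j \<in> I \<Longrightarrow> i \<noteq> j \<Longrightarrow> R i j \<or> R j i"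
    and sorted_W: "\<And>i j. i \<in> I \<Longrightarrow> j \<in> I \<Longrightarrow> R i j \<Longrightarrow> W i \<le> W j"
    and sorted_Z: "\<And>i j. i \<in> I \<Longrightarrow> j \<in> I \<Longrightarrow> R i j \<Longrightarrow> Z i \<le> Z j"
    and W_gt: "\<And>i. i \<in> I \<Longrightarrow> m - \<delta>/8 < W i"
    and Z_le: "\<And>i. i \<in> I \<Longrightarrow> Z i \<le> M + \<delta>/8"
    and counts: "\<And>j::nat. m + j * \<delta> \<le> M \<Longrightarrow>
      card {i\<in>I. W i \<le> m - 3*\<delta>/8 + j * \<delta>} \<le> card {i\<in>I. Z i < m - 3*\<delta>/8 + j * \<delta> + \<delta>}"
  shows "Z i < W i + 3 * \<delta>"
proof (rule ccontr)
  assume "\<not> Z i < W i + 3 * \<delta>"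
  moreover obtain j :: nat where j: "W i \<le> m - 3*\<delta>/8 + j * \<delta>" "m - 3*\<delta>/8 + j * \<delta> < W i + \<delta>"
    using exists_nat_step_between[of \<delta> "m - 3*\<delta>/8" "W i"] W_gt[OF \<open>i \<in> I\<close>] \<open>0 < \<delta>\<close> by auto
  ultimately have "m + j * \<delta> \<le> M"
    using Z_le[OF \<open>i \<in> I\<close>] by linarith
  have "card {k\<in>I. Z k < Z i} < card {k\<in>I. W k \<le> W i}"
    using assms(1,3) R_irrefl R_total sorted_W sorted_Z by (rule sorted_card_less_lt_card_le)
  also have "\<dots> \<le> card {k\<in>I. W k \<le> m - 3*\<delta>/8 + j * \<delta>}"
    using assms(1) j(1) by (intro card_mono) auto
  also have "\<dots> \<le> card {k\<in>I. Z k < m - 3*\<delta>/8 + j * \<delta> + \<delta>}"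
    using counts[OF \<open>m + j * \<delta> \<le> M\<close>] .
  also have "\<dots> \<le> card {k\<in>I. Z k < Z i}"
    using assms(1,2) j(2) \<open>\<not> Z i < W i + 3 * \<delta>\<close> by (intro card_mono) auto
  finally show False
    by simp
qed

section \<open>Sorted arrangements with a common limit distribution\<close>

lemma finite_nat_mult_le:
  fixes \<delta> :: real
  assumes "0 < \<delta>"
  shows "finite {j::nat. m + j * \<delta> \<le> M}"
proof (rule finite_subset)
  show "{j::nat. m + j * \<delta> \<le> M} \<subseteq> {..nat \<lceil>(M - m) / \<delta>\<rceil>}"
  proof
    fix j assume "j \<in> {j::nat. m + j * \<delta> \<le> M}"
    then have "real j \<le> (M - m) / \<delta>"
      using assms by (simp add: field_simps)
    then have "real j \<le> real (nat \<lceil>(M - m) / \<delta>\<rceil>)"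
      using real_nat_ceiling_ge order_trans by blast
    then show "j \<in> {..nat \<lceil>(M - m) / \<delta>\<rceil>}"
      by simp
  qed
qed simp

lemma eventually_sorted_upper_close:
  fixes W Z :: "nat \<Rightarrow> 'i \<Rightarrow> real" and L :: "(real \<Rightarrow> real) \<Rightarrow> real"
  assumes fin: "\<And>n. finite (I n)" and "0 < \<delta>"
    and R_irrefl: "\<And>i. \<not> R i i"
    and R_total: "\<And>n i j. i \<in> I n \<Longrightarrow> j \<in> I n \<Longrightarrow> i \<noteq> j \<Longrightarrow> R i j \<or> R j i"
    and sorted_W: "\<And>n i j. i \<in> I n \<Longrightarrow> j \<in> I n \<Longrightarrow> R i j \<Longrightarrow> W n i \<le> W n j"
    and sorted_Z: "\<And>n i j. i \<in> I n \<Longrightarrow> j \<in> I n \<Longrightarrow> R i j \<Longrightarrow> Z n i \<le> Z n j"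
    and \<epsilon>: "\<epsilon> \<longlonglongrightarrow> 0"
    and W_range: "\<And>n i. i \<in> I n \<Longrightarrow> m - \<epsilon> n \<le> W n i \<and> W n i \<le> M + \<epsilon> n"
    and Z_range: "\<And>n i. i \<in> I n \<Longrightarrow> m - \<epsilon> n \<le> Z n i \<and> Z n i \<le> M + \<epsilon> n"
    and W_lim: "\<And>lo hi r. 0 < r \<Longrightarrow>
      (\<lambda>n. (\<Sum>i\<in>I n. trap lo hi r (W n i)) / real (card (I n))) \<longlonglongrightarrow> L (trap lo hi r)"
    and Z_lim: "\<And>lo hi r. 0 < r \<Longrightarrow>
      (\<lambda>n. (\<Sum>i\<in>I n. trap lo hi r (Z n i)) / real (card (I n))) \<longlonglongrightarrow> L (trap lo hi r)"
    and gap: "\<And>lo t r. 0 < r \<Longrightarrow> lo \<le> t \<Longrightarrow> m \<le> t + 3*r/4 \<Longrightarrow> t + 3*r/4 \<le> M \<Longrightarrow>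
      L (trap lo t r) < L (trap lo (t + r) r)"
  shows "eventually (\<lambda>n. \<forall>i\<in>I n. Z n i < W n i + 3 * \<delta>) sequentially"
proof -
  define t where "t j = m - 3*\<delta>/8 + real j * \<delta>" for j :: nat
  have small: "eventually (\<lambda>n. \<bar>\<epsilon> n\<bar> < \<delta>/8) sequentially"
    using tendsto_rabs_zero[OF \<epsilon>] by (rule order_tendstoD) (use \<open>0 < \<delta>\<close> in simp)
  then have W_ge: "eventually (\<lambda>n. \<forall>i\<in>I n. m - \<delta> \<le> W n i) sequentially"
    by eventually_elim (use W_range in force)
  have "finite {j::nat. m + j * \<delta> \<le> M}"
    using \<open>0 < \<delta>\<close> by (rule finite_nat_mult_le)
  then have "eventually (\<lambda>n. \<forall>j\<in>{j::nat. m + j * \<delta> \<le> M}.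
      card {i\<in>I n. W n i \<le> t j} \<le> card {i\<in>I n. Z n i < t j + 2 * (\<delta>/2)}) sequentially"
  proof (rule eventually_ball_finite, intro ballI)
    fix j :: nat assume "j \<in> {j::nat. m + j * \<delta> \<le> M}"
    moreover have "m - \<delta> \<le> t j"
      unfolding t_def using \<open>0 < \<delta>\<close> mult_nonneg_nonneg[of "real j" \<delta>] by linarith
    ultimately show "eventually (\<lambda>n. card {i\<in>I n. W n i \<le> t j} \<le> card {i\<in>I n. Z n i < t j + 2 * (\<delta>/2)}) sequentially"
      using \<open>0 < \<delta>\<close> unfolding t_def
      by (intro eventually_card_le_card_less[OF fin W_ge W_lim Z_lim] gap) auto
  qed
  with small show ?thesis
  proof eventually_elim
    case (elim n)
    show ?case
    proof
      fix i assume "i \<in> I n"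
      show "Z n i < W n i + 3 * \<delta>"
      proof (rule sorted_close_of_counts[where R=R and m=m and M=M])
        show "m - \<delta>/8 < W n k" "Z n k \<le> M + \<delta>/8" if "k \<in> I n" for k
          using W_range[OF that] Z_range[OF that] elim(1) by auto
        show "card {k\<in>I n. W n k \<le> m - 3*\<delta>/8 + j * \<delta>} \<le> card {k\<in>I n. Z n k < m - 3*\<delta>/8 + j * \<delta> + \<delta>}"
          if "m + j * \<delta> \<le> M" for j :: nat
          using elim(2) that unfolding t_def by auto
      qed (use fin \<open>0 < \<delta>\<close> \<open>i \<in> I n\<close> R_irrefl R_total sorted_W sorted_Z in auto)
    qed
  qed
qed

lemma sorted_max_dist_tendsto_0:
  fixes U V :: "nat \<Rightarrow> 'i \<Rightarrow> real" and L :: "(real \<Rightarrow> real) \<Rightarrow> real"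
  assumes fin: "\<And>n. finite (I n)"
    and nonempty: "eventually (\<lambda>n. I n \<noteq> {}) sequentially"
    and R_irrefl: "\<And>i. \<not> R i i"
    and R_total: "\<And>n i j. i \<in> I n \<Longrightarrow> j \<in> I n \<Longrightarrow> i \<noteq> j \<Longrightarrow> R i j \<or> R j i"
    and sorted_U: "\<And>n i j. i \<in> I n \<Longrightarrow> j \<in> I n \<Longrightarrow> R i j \<Longrightarrow> U n i \<le> U n j"
    and sorted_V: "\<And>n i j. i \<in> I n \<Longrightarrow> j \<in> I n \<Longrightarrow> R i j \<Longrightarrow> V n i \<le> V n j"
    and \<epsilon>: "\<epsilon> \<longlonglongrightarrow> 0"
    and U_range: "\<And>n i. i \<in> I n \<Longrightarrow> m - \<epsilon> n \<le> U n i \<and> U n i \<le> M + \<epsilon> n"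
    and V_range: "\<And>n i. i \<in> I n \<Longrightarrow> m - \<epsilon> n \<le> V n i \<and> V n i \<le> M + \<epsilon> n"
    and U_lim: "\<And>lo hi r. 0 < r \<Longrightarrow>
      (\<lambda>n. (\<Sum>i\<in>I n. trap lo hi r (U n i)) / real (card (I n))) \<longlonglongrightarrow> L (trap lo hi r)"
    and V_lim: "\<And>lo hi r. 0 < r \<Longrightarrow>
      (\<lambda>n. (\<Sum>i\<in>I n. trap lo hi r (V n i)) / real (card (I n))) \<longlonglongrightarrow> L (trap lo hi r)"
    and gap: "\<And>lo t r. 0 < r \<Longrightarrow> lo \<le> t \<Longrightarrow> m \<le> t + 3*r/4 \<Longrightarrow> t + 3*r/4 \<le> M \<Longrightarrow>
      L (trap lo t r) < L (trap lo (t + r) r)"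
  shows "(\<lambda>n. Max {\<bar>U n i - V n i\<bar> | i. i \<in> I n}) \<longlonglongrightarrow> 0"
proof (rule tendstoI)
  fix e :: real assume "0 < e"
  then have "0 < e/4"
    by simp
  have "eventually (\<lambda>n. \<forall>i\<in>I n. V n i < U n i + 3 * (e/4)) sequentially"
    using eventually_sorted_upper_close[where I=I and R=R and W=U and Z=V and L=L,
        OF fin \<open>0 < e/4\<close> R_irrefl R_total sorted_U sorted_V \<epsilon> U_range V_range U_lim V_lim gap] .
  moreover have "eventually (\<lambda>n. \<forall>i\<in>I n. U n i < V n i + 3 * (e/4)) sequentially"
    using eventually_sorted_upper_close[where I=I and R=R and W=V and Z=U and L=L,
        OF fin \<open>0 < e/4\<close> R_irrefl R_total sorted_V sorted_U \<epsilon> V_range U_range V_lim U_lim gap] .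
  ultimately show "eventually (\<lambda>n. dist (Max {\<bar>U n i - V n i\<bar> | i. i \<in> I n}) 0 < e) sequentially"
    using nonempty
  proof eventually_elim
    case (elim n)
    have "Max {\<bar>U n i - V n i\<bar> | i. i \<in> I n} \<in> {\<bar>U n i - V n i\<bar> | i. i \<in> I n}"
      using fin[of n] elim(3) by (intro Max_in) auto
    then obtain i where "i \<in> I n" "Max {\<bar>U n i - V n i\<bar> | i. i \<in> I n} = \<bar>U n i - V n i\<bar>"
      by auto
    then show ?case
      using elim(1,2) \<open>0 < e\<close> by fastforce
  qed
qed

lemma sorted_rearrangement_max_dist_tendsto_0:
  fixes U V :: "nat \<Rightarrow> 'i \<Rightarrow> real" and L :: "(real \<Rightarrow> real) \<Rightarrow> real"
  assumes fin: "\<And>n. finite (I n)"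
    and nonempty: "eventually (\<lambda>n. I n \<noteq> {}) sequentially"
    and R_irrefl: "\<And>i. \<not> R i i"
    and R_total: "\<And>n i j. i \<in> I n \<Longrightarrow> j \<in> I n \<Longrightarrow> i \<noteq> j \<Longrightarrow> R i j \<or> R j i"
    and \<epsilon>: "\<epsilon> \<longlonglongrightarrow> 0"
    and U_range: "\<And>n i. i \<in> I n \<Longrightarrow> m - \<epsilon> n \<le> U n i \<and> U n i \<le> M + \<epsilon> n"
    and V_range: "\<And>n i. i \<in> I n \<Longrightarrow> m - \<epsilon> n \<le> V n i \<and> V n i \<le> M + \<epsilon> n"
    and U_lim: "\<And>lo hi r. 0 < r \<Longrightarrow>
      (\<lambda>n. (\<Sum>i\<in>I n. trap lo hi r (U n i)) / real (card (I n))) \<longlonglongrightarrow> L (trap lo hi r)"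
    and V_lim: "\<And>lo hi r. 0 < r \<Longrightarrow>
      (\<lambda>n. (\<Sum>i\<in>I n. trap lo hi r (V n i)) / real (card (I n))) \<longlonglongrightarrow> L (trap lo hi r)"
    and gap: "\<And>lo t r. 0 < r \<Longrightarrow> lo \<le> t \<Longrightarrow> m \<le> t + 3*r/4 \<Longrightarrow> t + 3*r/4 \<le> M \<Longrightarrow>
      L (trap lo t r) < L (trap lo (t + r) r)"
    and \<sigma>: "\<And>n. \<sigma> n permutes I n" and \<tau>: "\<And>n. \<tau> n permutes I n"
    and sorted: "\<And>n i j. i \<in> I n \<Longrightarrow> j \<in> I n \<Longrightarrow> R i j \<Longrightarrow>
      U n (\<sigma> n i) \<le> U n (\<sigma> n j) \<and> V n (\<tau> n i) \<le> V n (\<tau> n j)"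
  shows "(\<lambda>n. Max {\<bar>U n (\<sigma> n i) - V n (\<tau> n i)\<bar> | i. i \<in> I n}) \<longlonglongrightarrow> 0"
proof (rule sorted_max_dist_tendsto_0[where I=I and R=R and L=L, OF fin nonempty R_irrefl R_total _ _ \<epsilon> _ _ _ _ gap])
  fix lo hi r :: real assume "0 < r"
  have "(\<Sum>i\<in>I n. trap lo hi r (U n (\<sigma> n i))) = (\<Sum>i\<in>I n. trap lo hi r (U n i))"
    "(\<Sum>i\<in>I n. trap lo hi r (V n (\<tau> n i))) = (\<Sum>i\<in>I n. trap lo hi r (V n i))" for n
    using sum.permute[OF \<sigma>[of n], of "\<lambda>i. trap lo hi r (U n i)"]
      sum.permute[OF \<tau>[of n], of "\<lambda>i. trap lo hi r (V n i)"] by (simp_all add: o_def)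
  then show "(\<lambda>n. (\<Sum>i\<in>I n. trap lo hi r (U n (\<sigma> n i))) / real (card (I n))) \<longlonglongrightarrow> L (trap lo hi r)"
    "(\<lambda>n. (\<Sum>i\<in>I n. trap lo hi r (V n (\<tau> n i))) / real (card (I n))) \<longlonglongrightarrow> L (trap lo hi r)"
    using U_lim[OF \<open>0 < r\<close>] V_lim[OF \<open>0 < r\<close>] by simp_all
qed (use sorted U_range V_range permutes_in_image[OF \<sigma>] permutes_in_image[OF \<tau>] in auto)

lemma Min_Max_permutes_le:
  fixes u v :: "'i \<Rightarrow> real"
  assumes "finite I" "\<sigma> permutes I" "\<tau> permutes I"
  shows "Min {Max {\<bar>u i - v (\<pi> i)\<bar> | i. i \<in> I} | \<pi>. \<pi> permutes I} \<le> Max {\<bar>u (\<sigma> i) - v (\<tau> i)\<bar> | i. i \<in> I}"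
proof -
  define \<pi> where "\<pi> = \<tau> \<circ> inv \<sigma>"
  have "\<pi> permutes I"
    unfolding \<pi>_def using assms by (intro permutes_compose permutes_inv)
  moreover have "{\<bar>u i - v (\<pi> i)\<bar> | i. i \<in> I} = {\<bar>u (\<sigma> i) - v (\<tau> i)\<bar> | i. i \<in> I}"
  proof -
    have "{\<bar>u i - v (\<pi> i)\<bar> | i. i \<in> I} = (\<lambda>i. \<bar>u i - v (\<pi> i)\<bar>) ` \<sigma> ` I"
      by (simp add: setcompr_eq_image permutes_image[OF assms(2)])
    also have "\<dots> = {\<bar>u (\<sigma> i) - v (\<tau> i)\<bar> | i. i \<in> I}"
      unfolding \<pi>_def image_image by (simp add: permutes_inverses(2)[OF assms(2)] setcompr_eq_image)
    finally show ?thesis .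
  qed
  ultimately have "Max {\<bar>u (\<sigma> i) - v (\<tau> i)\<bar> | i. i \<in> I} \<in> {Max {\<bar>u i - v (\<pi> i)\<bar> | i. i \<in> I} | \<pi>. \<pi> permutes I}"
    by (intro CollectI exI[of _ \<pi>] conjI) simp_all
  then show ?thesis
    using finite_permutations[OF assms(1)] by (intro Min_le) auto
qed

lemma Min_Max_permutes_nonneg:
  fixes u v :: "'i \<Rightarrow> real"
  assumes "finite I" "I \<noteq> {}"
  shows "0 \<le> Min {Max {\<bar>u i - v (\<pi> i)\<bar> | i. i \<in> I} | \<pi>. \<pi> permutes I}"
proof -
  obtain i where "i \<in> I"
    using assms(2) by auto
  have "0 \<le> Max {\<bar>u i - v (\<pi> i)\<bar> | i. i \<in> I}" for \<pi>
    using assms(1) \<open>i \<in> I\<close> by (intro order_trans[OF abs_ge_zero Max_ge]) auto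
  moreover have "{\<pi>. \<pi> permutes I} \<noteq> {}"
    using permutes_id by blast
  ultimately show ?thesis
    using finite_permutations[OF assms(1)] by (subst Min_ge_iff) auto
qed

lemma min_rearrangement_max_dist_tendsto_0:
  fixes U V :: "nat \<Rightarrow> 'i \<Rightarrow> real"
  assumes fin: "\<And>n. finite (I n)"
    and nonempty: "eventually (\<lambda>n. I n \<noteq> {}) sequentially"
    and R_trans: "\<And>i j k. R i j \<Longrightarrow> R j k \<Longrightarrow> R i k"
    and R_irrefl: "\<And>i. \<not> R i i"
    and R_total: "\<And>n i j. i \<in> I n \<Longrightarrow> j \<in> I n \<Longrightarrow> i \<noteq> j \<Longrightarrow> R i j \<or> R j i"
    and sorted_match: "\<forall>\<sigma> \<tau>. (\<forall>n. \<sigma> n permutes I n \<and> \<tau> n permutes I n \<and>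
        (\<forall>i\<in>I n. \<forall>j\<in>I n. R i j \<longrightarrow> U n (\<sigma> n i) \<le> U n (\<sigma> n j) \<and> V n (\<tau> n i) \<le> V n (\<tau> n j)))
      \<longrightarrow> (\<lambda>n. Max {\<bar>U n (\<sigma> n i) - V n (\<tau> n i)\<bar> | i. i \<in> I n}) \<longlonglongrightarrow> 0"
  shows "(\<lambda>n. Min {Max {\<bar>U n i - V n (\<tau> i)\<bar> | i. i \<in> I n} | \<tau>. \<tau> permutes I n}) \<longlonglongrightarrow> 0"
proof -
  have sorting: "\<exists>\<pi>. \<pi> permutes I n \<and> (\<forall>i\<in>I n. \<forall>j\<in>I n. R i j \<longrightarrow> w (\<pi> i) \<le> w (\<pi> j))"
    for n and w :: "'i \<Rightarrow> real"
    using fin R_trans R_irrefl R_total by (rule exists_permutes_sorted)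
  have "\<exists>\<sigma>. \<forall>n. \<sigma> n permutes I n \<and> (\<forall>i\<in>I n. \<forall>j\<in>I n. R i j \<longrightarrow> U n (\<sigma> n i) \<le> U n (\<sigma> n j))"
    by (intro choice allI sorting)
  moreover have "\<exists>\<tau>. \<forall>n. \<tau> n permutes I n \<and> (\<forall>i\<in>I n. \<forall>j\<in>I n. R i j \<longrightarrow> V n (\<tau> n i) \<le> V n (\<tau> n j))"
    by (intro choice allI sorting)
  ultimately obtain \<sigma> \<tau> where
    \<sigma>: "\<forall>n. \<sigma> n permutes I n \<and> (\<forall>i\<in>I n. \<forall>j\<in>I n. R i j \<longrightarrow> U n (\<sigma> n i) \<le> U n (\<sigma> n j))" and
    \<tau>: "\<forall>n. \<tau> n permutes I n \<and> (\<forall>i\<in>I n. \<forall>j\<in>I n. R i j \<longrightarrow> V n (\<tau> n i) \<le> V n (\<tau> n j))"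
    by blast
  have lim: "(\<lambda>n. Max {\<bar>U n (\<sigma> n i) - V n (\<tau> n i)\<bar> | i. i \<in> I n}) \<longlonglongrightarrow> 0"
    by (rule sorted_match[rule_format]) (use \<sigma> \<tau> in simp)
  have lower: "eventually (\<lambda>n. 0 \<le> Min {Max {\<bar>U n i - V n (\<pi> i)\<bar> | i. i \<in> I n} | \<pi>. \<pi> permutes I n}) sequentially"
    using nonempty by eventually_elim (rule Min_Max_permutes_nonneg[OF fin])
  have upper: "Min {Max {\<bar>U n i - V n (\<pi> i)\<bar> | i. i \<in> I n} | \<pi>. \<pi> permutes I n}
      \<le> Max {\<bar>U n (\<sigma> n i) - V n (\<tau> n i)\<bar> | i. i \<in> I n}" for n
    by (rule Min_Max_permutes_le[OF fin]) (use \<sigma> \<tau> in simp_all)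
  show ?thesis
    by (rule tendsto_sandwich[OF lower _ tendsto_const lim]) (simp add: upper)
qed

section \<open>Grid cells and Riemann sums\<close>

lemma finite_multi_range: "finite (multi_range N)"
proof (rule finite_subset)
  show "multi_range N \<subseteq> PiE UNIV (\<lambda>k. {1..N k})"
    unfolding multi_range_def PiE_def Pi_def extensional_def by auto
qed (intro finite_PiE, auto)

lemma measure_cbox_cart:
  fixes a b :: "real^'d"
  assumes "\<And>k. a$k \<le> b$k"
  shows "measure lebesgue (cbox a b) = (\<Prod>k\<in>UNIV. b$k - a$k)"
  using assms content_cbox_cart[of a b] by (simp add: interval_ne_empty_cart)

definition mesh :: "real^'d \<Rightarrow> real^'d \<Rightarrow> ('d \<Rightarrow> nat) \<Rightarrow> 'd \<Rightarrow> real" where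
  "mesh a b N k = (b$k - a$k) / real (N k)"

definition cell_index :: "real^'d \<Rightarrow> real^'d \<Rightarrow> ('d \<Rightarrow> nat) \<Rightarrow> real^'d \<Rightarrow> 'd \<Rightarrow> nat" where
  "cell_index a b N y = (\<lambda>k. max 1 (nat \<lceil>(y$k - a$k) / mesh a b N k\<rceil>))"

text \<open>The cell of index \<open>i\<close> is the box \<open>(cell_lower a b N i, unif_point a b N i]\<close>, except
  that the cells touching the faces through \<open>a\<close> also contain those faces.\<close>
definition cell :: "real^'d \<Rightarrow> real^'d \<Rightarrow> ('d::finite \<Rightarrow> nat) \<Rightarrow> ('d \<Rightarrow> nat) \<Rightarrow> (real^'d) set" where
  "cell a b N i = {y \<in> cbox a b. cell_index a b N y = i}"

definition cell_lower :: "real^'d \<Rightarrow> real^'d \<Rightarrow> ('d::finite \<Rightarrow> nat) \<Rightarrow> ('d \<Rightarrow> nat) \<Rightarrow> real^'d" where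
  "cell_lower a b N i = (\<chi> k. a$k + (real (i k) - 1) * mesh a b N k)"

definition cell_step :: "real^'d \<Rightarrow> real^'d \<Rightarrow> ('d::finite \<Rightarrow> nat) \<Rightarrow> (('d \<Rightarrow> nat) \<Rightarrow> real) \<Rightarrow> real^'d \<Rightarrow> real" where
  "cell_step a b N \<phi> y = (\<Sum>i\<in>multi_range N. indicator (cell a b N i) y * \<phi> i)"

lemma unif_point_component: "unif_point a b N i $ k = a$k + real (i k) * mesh a b N k"
  unfolding unif_point_def mesh_def by simp

context
  fixes a b :: "real^'d::finite" and N :: "'d \<Rightarrow> nat"
  assumes ab: "\<And>k. a$k < b$k" and N_pos: "\<And>k. 1 \<le> N k"
begin

lemma mesh_pos: "0 < mesh a b N k"
  unfolding mesh_def using ab[of k] N_pos[of k] by auto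

lemma cell_index_in_multi_range:
  assumes "y \<in> cbox a b"
  shows "cell_index a b N y \<in> multi_range N"
  unfolding multi_range_def
proof (intro CollectI allI conjI)
  fix k
  have "(y$k - a$k) / mesh a b N k \<le> (b$k - a$k) / mesh a b N k"
    using assms mesh_pos[of k] by (intro divide_right_mono) (auto simp: mem_box_cart)
  also have "\<dots> = real (N k)"
    unfolding mesh_def using ab[of k] N_pos[of k] by simp
  finally have "nat \<lceil>(y$k - a$k) / mesh a b N k\<rceil> \<le> N k"
    by (simp add: nat_le_iff ceiling_le_iff)
  then show "cell_index a b N y k \<le> N k"
    unfolding cell_index_def using N_pos[of k] by simp
qed (simp add: cell_index_def)

lemma mem_cbox_cell_corners:
  assumes "y \<in> cbox a b"
  shows "y \<in> cbox (cell_lower a b N (cell_index a b N y)) (unif_point a b N (cell_index a b N y))"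
  unfolding mem_box_cart cell_lower_def unif_point_component
proof (intro allI conjI)
  fix k
  define q where "q = (y$k - a$k) / mesh a b N k"
  have h: "0 < mesh a b N k"
    by (rule mesh_pos)
  have y_eq: "y$k = a$k + q * mesh a b N k" and "a$k \<le> y$k"
    using h assms unfolding q_def by (auto simp: mem_box_cart)
  have idx: "cell_index a b N y k = max 1 (nat \<lceil>q\<rceil>)"
    unfolding cell_index_def q_def by simp
  have "(real (cell_index a b N y k) - 1) * mesh a b N k \<le> q * mesh a b N k \<or> cell_index a b N y k = 1"
  proof (cases "1 \<le> \<lceil>q\<rceil>")
    case True
    then have "cell_index a b N y k = nat \<lceil>q\<rceil>"
      unfolding idx by arith
    then have "real (cell_index a b N y k) = of_int \<lceil>q\<rceil>"
      using True by simp
    then show ?thesis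
      using h of_int_ceiling_diff_one_le[of q] by (intro disjI1 mult_right_mono) auto
  qed (simp add: idx)
  then show "(\<chi> k. a$k + (real (cell_index a b N y k) - 1) * mesh a b N k) $ k \<le> y$k"
    using y_eq \<open>a$k \<le> y$k\<close> by auto
  have "q \<le> real (cell_index a b N y k)"
    unfolding idx using real_nat_ceiling_ge[of q] by (simp add: of_nat_max)
  then have "q * mesh a b N k \<le> real (cell_index a b N y k) * mesh a b N k"
    using h by (intro mult_right_mono) auto
  then show "y$k \<le> a$k + real (cell_index a b N y k) * mesh a b N k"
    using y_eq by simp
qed


lemma cell_subset_cbox: "cell a b N i \<subseteq> cbox (cell_lower a b N i) (unif_point a b N i)"
  unfolding cell_def using mem_cbox_cell_corners by auto

lemma box_subset_cell:
  assumes i: "i \<in> multi_range N"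
  shows "box (cell_lower a b N i) (unif_point a b N i) \<subseteq> cell a b N i"
proof
  fix y assume y: "y \<in> box (cell_lower a b N i) (unif_point a b N i)"
  have ik: "1 \<le> i k" "i k \<le> N k" for k
    using i unfolding multi_range_def by auto
  have "\<forall>k. a$k + (real (i k) - 1) * mesh a b N k < y$k \<and> y$k < a$k + real (i k) * mesh a b N k"
    using y unfolding mem_box_cart cell_lower_def unif_point_component by simp
  then have yk: "(real (i k) - 1) * mesh a b N k < y$k - a$k" "y$k - a$k < real (i k) * mesh a b N k" for k
    by (simp_all add: algebra_simps)
  have "y \<in> cbox a b"
    unfolding mem_box_cart
  proof
    fix k
    have "real (i k) * mesh a b N k \<le> real (N k) * mesh a b N k"
      using ik[of k] mesh_pos[of k] by (intro mult_right_mono) auto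
    moreover have "real (N k) * mesh a b N k = b$k - a$k"
      unfolding mesh_def using N_pos[of k] by simp
    moreover have "0 \<le> (real (i k) - 1) * mesh a b N k"
      using ik[of k] mesh_pos[of k] by simp
    ultimately show "a$k \<le> y$k \<and> y$k \<le> b$k"
      using yk[of k] by linarith
  qed
  moreover have "cell_index a b N y k = i k" for k
  proof -
    have "real (i k) - 1 < (y$k - a$k) / mesh a b N k" "(y$k - a$k) / mesh a b N k < real (i k)"
      using yk[of k] mesh_pos[of k] by (simp_all add: field_simps)
    then have "\<lceil>(y$k - a$k) / mesh a b N k\<rceil> = int (i k)"
      by (simp add: ceiling_eq_iff)
    then show ?thesis
      unfolding cell_index_def using ik[of k] by simp
  qed
  ultimately show "y \<in> cell a b N i"
    unfolding cell_def by auto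
qed

text \<open>A cell differs from the closed box with the same corners by a null set.\<close>
lemma lmeasurable_cell_and_measure:
  assumes i: "i \<in> multi_range N"
  shows "cell a b N i \<in> lmeasurable"
    and "measure lebesgue (cell a b N i) = measure lebesgue (cbox a b) / real (\<Prod>k\<in>UNIV. N k)"
proof -
  let ?l = "cell_lower a b N i" and ?u = "unif_point a b N i"
  have "cbox ?l ?u - cell a b N i \<subseteq> cbox ?l ?u - box ?l ?u"
    using box_subset_cell[OF i] by blast
  then have null: "cbox ?l ?u - cell a b N i \<in> null_sets lebesgue"
    using negligible_frontier_interval negligible_subset negligible_iff_null_sets by blast
  have eq: "cell a b N i = cbox ?l ?u - (cbox ?l ?u - cell a b N i)"
    using cell_subset_cbox by blast
  then show "cell a b N i \<in> lmeasurable"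
    using null by (metis null_setsD2 fmeasurable_Diff lmeasurable_cbox)
  have "measure lebesgue (cell a b N i) = measure lebesgue (cbox ?l ?u)"
    using null by (subst eq) (intro measure_Diff_null_set, auto)
  also have "\<dots> = (\<Prod>k\<in>UNIV. mesh a b N k)"
  proof -
    have diff: "?u$k - ?l$k = mesh a b N k" for k
      by (simp add: cell_lower_def unif_point_component algebra_simps)
    have "?l$k \<le> ?u$k" for k
      using diff[of k] mesh_pos[of k] by linarith
    then show ?thesis
      by (simp only: measure_cbox_cart diff)
  qed
  also have "\<dots> = (\<Prod>k\<in>UNIV. (b$k - a$k) / real (N k))"
    unfolding mesh_def ..
  also have "\<dots> = measure lebesgue (cbox a b) / real (\<Prod>k\<in>UNIV. N k)"
    unfolding measure_cbox_cart[OF less_imp_le[OF ab]] by (simp add: prod_dividef)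
  finally show "measure lebesgue (cell a b N i) = measure lebesgue (cbox a b) / real (\<Prod>k\<in>UNIV. N k)" .
qed

end

lemma cell_step_eq:
  "cell_step a b N \<phi> y =
     (if y \<in> cbox a b \<and> cell_index a b N y \<in> multi_range N then \<phi> (cell_index a b N y) else 0)"
proof (cases "y \<in> cbox a b")
  case True
  then have "cell_step a b N \<phi> y = (\<Sum>i\<in>multi_range N. if cell_index a b N y = i then \<phi> i else 0)"
    unfolding cell_step_def cell_def by (intro sum.cong) (auto simp: indicator_def)
  then show ?thesis
    using True finite_multi_range[of N] by simp
next
  case False
  then show ?thesis
    unfolding cell_step_def cell_def by (simp add: indicator_def)
qed

lemma cell_step_measurable:
  assumes ab: "\<And>k. a$k < b$k"
  shows "cell_step a b N \<phi> \<in> borel_measurable lebesgue"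
proof (cases "\<forall>k. 1 \<le> N k")
  case True
  then show ?thesis
    unfolding cell_step_def using lmeasurable_cell_and_measure(1)[OF ab]
    by (intro borel_measurable_sum borel_measurable_times borel_measurable_const
        borel_measurable_indicator fmeasurableD) auto
next
  case False
  then obtain k where "N k = 0"
    by (meson less_one not_le)
  then have "\<not> (1 \<le> i k \<and> i k \<le> N k)" for i
    by simp
  then have "multi_range N = {}"
    unfolding multi_range_def by blast
  then show ?thesis
    unfolding cell_step_def by simp
qed

lemma integrable_cell_step_and_integral:
  assumes ab: "\<And>k. a$k < b$k" and N_pos: "\<And>k. 1 \<le> N k"
  shows "integrable lebesgue (cell_step a b N \<phi>)"
    and "integral\<^sup>L lebesgue (cell_step a b N \<phi>)
      = (\<Sum>i\<in>multi_range N. \<phi> i) * (measure lebesgue (cbox a b) / real (\<Prod>k\<in>UNIV. N k))"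
proof -
  note cell = lmeasurable_cell_and_measure[where N=N, OF ab N_pos]
  have int: "integrable lebesgue (\<lambda>y. indicator (cell a b N i) y * \<phi> i)" if "i \<in> multi_range N" for i
  proof (intro integrable_mult_left integrable_real_indicator)
    show "cell a b N i \<in> sets lebesgue" "emeasure lebesgue (cell a b N i) < \<infinity>"
      using fmeasurableD[OF cell(1)[OF that]] less_top[THEN iffD1, OF fmeasurableD2[OF cell(1)[OF that]]]
      by auto
  qed
  then show "integrable lebesgue (cell_step a b N \<phi>)"
    unfolding cell_step_def by (intro Bochner_Integration.integrable_sum)
  have "integral\<^sup>L lebesgue (cell_step a b N \<phi>)
      = (\<Sum>i\<in>multi_range N. measure lebesgue (cell a b N i) * \<phi> i)"
    unfolding cell_step_def using int by (subst Bochner_Integration.integral_sum) auto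
  also have "\<dots> = (\<Sum>i\<in>multi_range N. (measure lebesgue (cbox a b) / real (\<Prod>k\<in>UNIV. N k)) * \<phi> i)"
    using cell(2) by (intro sum.cong) auto
  also have "\<dots> = (\<Sum>i\<in>multi_range N. \<phi> i) * (measure lebesgue (cbox a b) / real (\<Prod>k\<in>UNIV. N k))"
    unfolding sum_distrib_left[symmetric] by (rule mult.commute)
  finally show "integral\<^sup>L lebesgue (cell_step a b N \<phi>)
      = (\<Sum>i\<in>multi_range N. \<phi> i) * (measure lebesgue (cbox a b) / real (\<Prod>k\<in>UNIV. N k))" .
qed

definition grid_error ::
  "(nat \<Rightarrow> ('d::finite \<Rightarrow> nat) \<Rightarrow> real^'d) \<Rightarrow> real^'d \<Rightarrow> real^'d \<Rightarrow> (nat \<Rightarrow> 'd \<Rightarrow> nat) \<Rightarrow> nat \<Rightarrow> real"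
where
  "grid_error x a b N n =
     Max ({0} \<union> {\<bar>x n i $ k - unif_point a b (N n) i $ k\<bar> | i k. i \<in> multi_range (N n)})"

lemma au_grid_iff_grid_error: "au_grid x a b N \<longleftrightarrow> grid_error x a b N \<longlonglongrightarrow> 0"
  unfolding au_grid_def grid_error_def ..

lemma grid_error_ge:
  assumes "i \<in> multi_range (N n)"
  shows "\<bar>x n i $ k - unif_point a b (N n) i $ k\<bar> \<le> grid_error x a b N n"
proof -
  have "{\<bar>x n i $ k - unif_point a b (N n) i $ k\<bar> | i k. i \<in> multi_range (N n)}
      = (\<lambda>(i, k). \<bar>x n i $ k - unif_point a b (N n) i $ k\<bar>) ` (multi_range (N n) \<times> UNIV)"
    by auto
  moreover have "finite ((\<lambda>(i, k). \<bar>x n i $ k - unif_point a b (N n) i $ k\<bar>) ` (multi_range (N n) \<times> UNIV))"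
    by (intro finite_imageI finite_cartesian_product finite_multi_range) simp
  ultimately have "finite {\<bar>x n i $ k - unif_point a b (N n) i $ k\<bar> | i k. i \<in> multi_range (N n)}"
    by simp
  then show ?thesis
    unfolding grid_error_def using assms by (intro Max_ge) auto
qed

lemma eventually_multi_index_pos:
  fixes N :: "nat \<Rightarrow> 'd::finite \<Rightarrow> nat"
  assumes "filterlim (\<lambda>n. Min (range (N n))) at_top sequentially"
  shows "eventually (\<lambda>n. \<forall>k. 1 \<le> N n k) sequentially"
proof -
  have "eventually (\<lambda>n. 1 \<le> Min (range (N n))) sequentially"
    using assms by (simp add: filterlim_at_top)
  then show ?thesis
    by eventually_elim simp
qed

lemma grid_point_of_cell_tendsto:
  fixes x :: "nat \<Rightarrow> ('d::finite \<Rightarrow> nat) \<Rightarrow> real^'d"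
  assumes ab: "\<And>k. a$k < b$k"
    and N_inf: "filterlim (\<lambda>n. Min (range (N n))) at_top sequentially"
    and grid: "au_grid x a b N" and y: "y \<in> cbox a b"
  shows "(\<lambda>n. x n (cell_index a b (N n) y)) \<longlonglongrightarrow> y"
proof (rule vec_tendstoI)
  fix k
  define h where "h n = grid_error x a b N n + (b$k - a$k) / real (Min (range (N n)))" for n
  have "h \<longlonglongrightarrow> 0 + 0"
    unfolding h_def using grid unfolding au_grid_iff_grid_error
    by (intro tendsto_add real_tendsto_divide_at_top[OF tendsto_const]
        filterlim_compose[OF filterlim_real_sequentially N_inf])
  then have h_lim: "h \<longlonglongrightarrow> 0"
    by simp
  have "eventually (\<lambda>n. norm (x n (cell_index a b (N n) y) $ k - y $ k) \<le> h n) sequentially"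
    using eventually_multi_index_pos[OF N_inf]
  proof eventually_elim
    case (elim n)
    let ?i = "cell_index a b (N n) y"
    have corner: "\<bar>unif_point a b (N n) ?i $ k - y $ k\<bar> \<le> mesh a b (N n) k"
      using mem_cbox_cell_corners[where N="N n", OF ab elim[rule_format] y]
      by (auto simp: mem_box_cart cell_lower_def unif_point_component algebra_simps)
    have "1 \<le> Min (range (N n))"
      using elim by simp
    then have "0 < real (N n k) * real (Min (range (N n)))"
      using elim by (intro mult_pos_pos) (simp_all add: Suc_le_eq)
    then have mesh: "mesh a b (N n) k \<le> (b$k - a$k) / real (Min (range (N n)))"
      unfolding mesh_def using ab[of k] by (intro divide_left_mono) simp_all
    show ?case
      using corner mesh grid_error_ge[where a=a and b=b and N=N and n=n, OF cell_index_in_multi_range[where N="N n", OF ab elim[rule_format] y], of x k]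
      unfolding h_def real_norm_def by arith
  qed
  then have "(\<lambda>n. x n (cell_index a b (N n) y) $ k - y $ k) \<longlonglongrightarrow> 0"
    using h_lim by (rule Lim_null_comparison)
  then show "(\<lambda>n. x n (cell_index a b (N n) y) $ k) \<longlonglongrightarrow> y $ k"
    by (rule LIM_zero_cancel)
qed

lemma cell_step_tendsto:
  fixes x :: "nat \<Rightarrow> ('d::finite \<Rightarrow> nat) \<Rightarrow> real^'d"
  assumes ab: "\<And>k. a$k < b$k"
    and N_inf: "filterlim (\<lambda>n. Min (range (N n))) at_top sequentially"
    and grid: "au_grid x a b N" and y: "y \<in> cbox a b" and g: "isCont g y"
  shows "(\<lambda>n. cell_step a b (N n) (\<lambda>i. g (x n i)) y) \<longlonglongrightarrow> g y"
proof -
  have "(\<lambda>n. g (x n (cell_index a b (N n) y))) \<longlonglongrightarrow> g y"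
    using g grid_point_of_cell_tendsto[OF ab N_inf grid y] by (rule isCont_tendsto_compose)
  moreover have "eventually (\<lambda>n. g (x n (cell_index a b (N n) y)) = cell_step a b (N n) (\<lambda>i. g (x n i)) y) sequentially"
    using eventually_multi_index_pos[OF N_inf]
    by eventually_elim (use y cell_index_in_multi_range[OF ab] in \<open>simp add: cell_step_eq\<close>)
  ultimately show ?thesis
    by (rule Lim_transform_eventually)
qed

text \<open>The step functions \<open>cell_step\<close> integrate to the Riemann sums and converge almost
  everywhere, so dominated convergence applies.\<close>
lemma grid_riemann_sum_tendsto:
  fixes x :: "nat \<Rightarrow> ('d::finite \<Rightarrow> nat) \<Rightarrow> real^'d" and g :: "real^'d \<Rightarrow> real"
  assumes ab: "\<And>k. a$k < b$k"
    and N_inf: "filterlim (\<lambda>n. Min (range (N n))) at_top sequentially"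
    and grid: "au_grid x a b N"
    and g_meas: "g \<in> borel_measurable lebesgue" and g_bound: "\<And>y. \<bar>g y\<bar> \<le> B"
    and g_cont: "AE y in lebesgue. isCont g y"
  shows "(\<lambda>n. (\<Sum>i\<in>multi_range (N n). g (x n i)) / real (\<Prod>k\<in>UNIV. N n k))
    \<longlonglongrightarrow> integral\<^sup>L lebesgue (\<lambda>y. indicator (cbox a b) y * g y) / measure lebesgue (cbox a b)"
proof -
  define V where "V = measure lebesgue (cbox a b)"
  have "0 < V"
    unfolding V_def measure_cbox_cart[OF less_imp_le[OF ab]] using ab by (simp add: prod_pos)
  have "(\<lambda>n. integral\<^sup>L lebesgue (cell_step a b (N n) (\<lambda>i. g (x n i))))
      \<longlonglongrightarrow> integral\<^sup>L lebesgue (\<lambda>y. indicator (cbox a b) y * g y)"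
  proof (rule integral_dominated_convergence[where w="\<lambda>y. indicator (cbox a b) y * B"])
    show "(\<lambda>y. indicator (cbox a b) y * g y) \<in> borel_measurable lebesgue"
      using g_meas by (intro borel_measurable_times borel_measurable_indicator) auto
    show "cell_step a b (N n) (\<lambda>i. g (x n i)) \<in> borel_measurable lebesgue" for n
      using ab by (rule cell_step_measurable)
    show "integrable lebesgue (\<lambda>y. indicator (cbox a b) y * B)"
      using emeasure_lborel_cbox_finite[of a b] by (intro integrable_mult_left integrable_real_indicator) auto
    show "AE y in lebesgue. (\<lambda>n. cell_step a b (N n) (\<lambda>i. g (x n i)) y) \<longlonglongrightarrow> indicator (cbox a b) y * g y"
      using g_cont
    proof eventually_elim
      case (elim y)
      show ?case
      proof (cases "y \<in> cbox a b")
        case True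
        then show ?thesis
          using cell_step_tendsto[OF ab N_inf grid True elim] by simp
      qed (simp add: cell_step_eq)
    qed
    show "AE y in lebesgue. norm (cell_step a b (N n) (\<lambda>i. g (x n i)) y) \<le> indicator (cbox a b) y * B" for n
      using g_bound order_trans[OF abs_ge_zero g_bound] by (intro AE_I2) (auto simp: cell_step_eq indicator_def)
  qed
  moreover have "eventually (\<lambda>n. integral\<^sup>L lebesgue (cell_step a b (N n) (\<lambda>i. g (x n i)))
      = (\<Sum>i\<in>multi_range (N n). g (x n i)) / real (\<Prod>k\<in>UNIV. N n k) * V) sequentially"
    using eventually_multi_index_pos[OF N_inf]
    by eventually_elim (simp add: integrable_cell_step_and_integral(2)[OF ab] V_def)
  ultimately have "(\<lambda>n. (\<Sum>i\<in>multi_range (N n). g (x n i)) / real (\<Prod>k\<in>UNIV. N n k) * V)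
      \<longlonglongrightarrow> integral\<^sup>L lebesgue (\<lambda>y. indicator (cbox a b) y * g y)"
    by (rule Lim_transform_eventually)
  then show ?thesis
    unfolding V_def[symmetric] using \<open>0 < V\<close> by (auto dest: tendsto_divide[OF _ tendsto_const, of _ _ _ V])
qed

section \<open>Averages over the samples in \<open>\<Omega>\<close>\<close>

lemma bounded_image_Inf_Sup_bounds:
  fixes f :: "'a \<Rightarrow> real"
  assumes "bounded (f ` S)" "y \<in> S"
  shows "Inf (f ` S) \<le> f y \<and> f y \<le> Sup (f ` S)"
  using assms by (auto intro: cInf_lower cSup_upper bounded_imp_bdd_below bounded_imp_bdd_above)

lemma AE_isCont_imp_borel_measurable:
  fixes h :: "'a::euclidean_space \<Rightarrow> real"
  assumes "AE y in lebesgue. isCont h y"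
  shows "h \<in> borel_measurable lebesgue"
proof -
  obtain Z where Z: "Z \<in> null_sets lebesgue" "\<And>y. y \<notin> Z \<Longrightarrow> isCont h y"
    using assms by (auto elim!: AE_E3)
  have "continuous_on (- Z) h"
    using Z(2) by (intro continuous_at_imp_continuous_on) auto
  moreover have "- Z \<in> sets lebesgue"
    using Z(1) by (simp add: Compl_in_sets_lebesgue null_setsD2)
  ultimately have "(\<lambda>y. if y \<in> - Z then h y else 0) \<in> borel_measurable lebesgue"
    by (intro borel_measurable_if_I continuous_imp_measurable_on_sets_lebesgue)
  moreover have "AE y in lebesgue. (if y \<in> - Z then h y else 0) = h y"
    using AE_not_in[OF Z(1)] by eventually_elim auto
  ultimately show ?thesis
    by (rule borel_measurable_AE)
qed

text \<open>Cutting off by the indicator of \<open>\<Omega>\<close> only creates discontinuities on the frontier.\<close>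
lemma AE_isCont_indicator_mult:
  fixes h :: "'a::euclidean_space \<Rightarrow> real"
  assumes frontier: "frontier \<Omega> \<in> null_sets lebesgue"
    and h_cont: "AE y in lebesgue. y \<in> \<Omega> \<longrightarrow> continuous (at y within \<Omega>) h"
  shows "AE y in lebesgue. isCont (\<lambda>z. indicator \<Omega> z * h z) y"
  using AE_not_in[OF frontier] h_cont
proof eventually_elim
  case (elim y)
  show ?case
  proof (cases "y \<in> interior \<Omega>")
    case True
    then have "continuous (at y within \<Omega>) h"
      using elim(2) interior_subset by blast
    then have "isCont h y"
      by (simp add: at_within_interior[OF True])
    moreover have "eventually (\<lambda>z. indicator \<Omega> z * h z = h z) (nhds y)"
      using eventually_nhds_in_open[OF open_interior True]
      by (rule eventually_mono) (use interior_subset in \<open>auto simp: indicator_def\<close>)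
    ultimately show ?thesis
      using isCont_cong by fastforce
  next
    case False
    then have "y \<in> - closure \<Omega>"
      using elim(1) unfolding frontier_def by auto
    then have "eventually (\<lambda>z. indicator \<Omega> z * h z = 0) (nhds y)"
    proof -
      have "eventually (\<lambda>z. z \<in> - closure \<Omega>) (nhds y)"
        using \<open>y \<in> - closure \<Omega>\<close> by (intro eventually_nhds_in_open) auto
      then show ?thesis
        by (rule eventually_mono) (use closure_subset in \<open>auto simp: indicator_def\<close>)
    qed
    then show ?thesis
      by (rule isCont_cong[THEN iffD2]) simp
  qed
qed

lemma AE_isCont_indicator_comp:
  fixes f :: "'a::euclidean_space \<Rightarrow> real" and F :: "real \<Rightarrow> real"
  assumes "frontier \<Omega> \<in> null_sets lebesgue"
    and f_cont: "AE y in lebesgue. y \<in> \<Omega> \<longrightarrow> continuous (at y within \<Omega>) f"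
    and "continuous_on UNIV F"
  shows "AE y in lebesgue. isCont (\<lambda>z. indicator \<Omega> z * F (f z)) y"
proof (rule AE_isCont_indicator_mult[OF assms(1)])
  have "isCont F z" for z
    using \<open>continuous_on UNIV F\<close> continuous_on_eq_continuous_at by blast
  then show "AE y in lebesgue. y \<in> \<Omega> \<longrightarrow> continuous (at y within \<Omega>) (\<lambda>z. F (f z))"
    using f_cont by (auto elim!: eventually_mono intro: continuous_within_compose3)
qed

lemma integrable_indicator_comp:
  fixes f :: "'a::euclidean_space \<Rightarrow> real" and F :: "real \<Rightarrow> real"
  assumes "\<Omega> \<in> lmeasurable" "frontier \<Omega> \<in> null_sets lebesgue"
    and "AE y in lebesgue. y \<in> \<Omega> \<longrightarrow> continuous (at y within \<Omega>) f"
    and "continuous_on UNIV F" and F_bound: "\<And>y. \<bar>F y\<bar> \<le> B"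
  shows "integrable lebesgue (\<lambda>y. indicator \<Omega> y * F (f y))"
proof (rule Bochner_Integration.integrable_bound)
  show "integrable lebesgue (\<lambda>y. indicator \<Omega> y * B)"
    using fmeasurableD[OF assms(1)] less_top[THEN iffD1, OF fmeasurableD2[OF assms(1)]]
    by (intro integrable_mult_left integrable_real_indicator) auto
  show "(\<lambda>y. indicator \<Omega> y * F (f y)) \<in> borel_measurable lebesgue"
    using assms(2-4) by (intro AE_isCont_imp_borel_measurable AE_isCont_indicator_comp)
  show "AE y in lebesgue. norm (indicator \<Omega> y * F (f y)) \<le> norm (indicator \<Omega> y * B)"
    using F_bound order_trans[OF abs_ge_zero F_bound] by (intro AE_I2) (auto simp: indicator_def)
qed

lemma cbox_nondegenerate_of_measure_pos:
  fixes S :: "(real^'d) set"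
  assumes "0 < measure lebesgue S" "S \<subseteq> cbox a b"
  shows "a$k < b$k"
proof (rule ccontr)
  assume "\<not> a$k < b$k"
  then have "negligible (cbox a b)"
    unfolding negligible_interval(1) using interval_ne_empty_cart(2)[of a b] by blast
  then have "measure lebesgue S = 0"
    using assms(2) negligible_subset negligible_imp_measure0 by blast
  then show False
    using assms(1) by simp
qed

lemma grid_sample_sum_tendsto:
  fixes x :: "nat \<Rightarrow> ('d::finite \<Rightarrow> nat) \<Rightarrow> real^'d" and h :: "real^'d \<Rightarrow> real"
  assumes ab: "\<And>k. a$k < b$k"
    and N_inf: "filterlim (\<lambda>n. Min (range (N n))) at_top sequentially"
    and grid: "au_grid x a b N"
    and I_def: "\<And>n. I n = {i \<in> multi_range (N n). x n i \<in> \<Omega>}"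
    and "\<Omega> \<subseteq> cbox a b"
    and h_cont: "AE y in lebesgue. isCont (\<lambda>z. indicator \<Omega> z * h z) y"
    and h_bound: "\<And>y. y \<in> \<Omega> \<Longrightarrow> \<bar>h y\<bar> \<le> B"
  shows "(\<lambda>n. (\<Sum>i\<in>I n. h (x n i)) / real (\<Prod>k\<in>UNIV. N n k))
    \<longlonglongrightarrow> integral\<^sup>L lebesgue (\<lambda>y. indicator \<Omega> y * h y) / measure lebesgue (cbox a b)"
proof -
  have "(\<lambda>n. (\<Sum>i\<in>multi_range (N n). indicator \<Omega> (x n i) * h (x n i)) / real (\<Prod>k\<in>UNIV. N n k))
    \<longlonglongrightarrow> integral\<^sup>L lebesgue (\<lambda>y. indicator (cbox a b) y * (indicator \<Omega> y * h y)) / measure lebesgue (cbox a b)"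
  proof (rule grid_riemann_sum_tendsto[OF ab N_inf grid])
    show "(\<lambda>y. indicator \<Omega> y * h y) \<in> borel_measurable lebesgue"
      using h_cont by (rule AE_isCont_imp_borel_measurable)
    show "\<bar>indicator \<Omega> y * h y\<bar> \<le> \<bar>B\<bar>" for y
      using h_bound[of y] by (auto simp: indicator_def)
  qed (rule h_cont)
  moreover have "(\<Sum>i\<in>multi_range (N n). indicator \<Omega> (x n i) * h (x n i)) = (\<Sum>i\<in>I n. h (x n i))" for n
    unfolding I_def sum.inter_filter[OF finite_multi_range] by (intro sum.cong) (auto simp: indicator_def)
  moreover have "indicator (cbox a b) y * (indicator \<Omega> y * h y) = indicator \<Omega> y * h y" for y
    using \<open>\<Omega> \<subseteq> cbox a b\<close> by (auto simp: indicator_def)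
  ultimately show ?thesis
    by simp
qed

lemma sample_mean_tendsto:
  fixes x :: "nat \<Rightarrow> ('d::finite \<Rightarrow> nat) \<Rightarrow> real^'d" and f :: "real^'d \<Rightarrow> real" and F :: "real \<Rightarrow> real"
  assumes N_inf: "filterlim (\<lambda>n. Min (range (N n))) at_top sequentially"
    and grid: "au_grid x a b N"
    and I_def: "\<And>n. I n = {i \<in> multi_range (N n). x n i \<in> \<Omega>}"
    and frontier: "frontier \<Omega> \<in> null_sets lebesgue"
    and f_cont: "AE y in lebesgue. y \<in> \<Omega> \<longrightarrow> continuous (at y within \<Omega>) f"
    and rect: "\<Omega> \<subseteq> cbox a b" and pos: "0 < measure lebesgue \<Omega>"
    and F_cont: "continuous_on UNIV F" and F_bound: "\<And>y. \<bar>F y\<bar> \<le> B"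
  shows "(\<lambda>n. (\<Sum>i\<in>I n. F (f (x n i))) / real (card (I n)))
    \<longlonglongrightarrow> integral\<^sup>L lebesgue (\<lambda>y. indicator \<Omega> y * F (f y)) / measure lebesgue \<Omega>"
proof -
  note ab = cbox_nondegenerate_of_measure_pos[OF pos rect]
  note sums = grid_sample_sum_tendsto[OF ab N_inf grid I_def rect]
  define V where "V = measure lebesgue (cbox a b)"
  have "0 < V"
    unfolding V_def measure_cbox_cart[OF less_imp_le[OF ab]] using ab by (simp add: prod_pos)
  have F_sums: "(\<lambda>n. (\<Sum>i\<in>I n. F (f (x n i))) / real (\<Prod>k\<in>UNIV. N n k))
      \<longlonglongrightarrow> integral\<^sup>L lebesgue (\<lambda>y. indicator \<Omega> y * F (f y)) / V"
    unfolding V_def by (rule sums[OF AE_isCont_indicator_comp[OF frontier f_cont F_cont] F_bound])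
  have counts: "(\<lambda>n. real (card (I n)) / real (\<Prod>k\<in>UNIV. N n k)) \<longlonglongrightarrow> measure lebesgue \<Omega> / V"
    using sums[of "\<lambda>_. 1" 1] AE_isCont_indicator_comp[OF frontier f_cont, of "\<lambda>_. 1"]
    unfolding V_def by simp
  have "(\<lambda>n. ((\<Sum>i\<in>I n. F (f (x n i))) / real (\<Prod>k\<in>UNIV. N n k))
      / (real (card (I n)) / real (\<Prod>k\<in>UNIV. N n k)))
    \<longlonglongrightarrow> (integral\<^sup>L lebesgue (\<lambda>y. indicator \<Omega> y * F (f y)) / V) / (measure lebesgue \<Omega> / V)"
    using tendsto_divide[OF F_sums counts] pos \<open>0 < V\<close> by simp
  moreover have "eventually (\<lambda>n. ((\<Sum>i\<in>I n. F (f (x n i))) / real (\<Prod>k\<in>UNIV. N n k))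
      / (real (card (I n)) / real (\<Prod>k\<in>UNIV. N n k)) = (\<Sum>i\<in>I n. F (f (x n i))) / real (card (I n))) sequentially"
    using eventually_multi_index_pos[OF N_inf]
  proof eventually_elim
    case (elim n)
    then have "real (\<Prod>k\<in>UNIV. N n k) \<noteq> 0"
      by (auto simp: Suc_le_eq)
    then show ?case
      by simp
  qed
  ultimately have "(\<lambda>n. (\<Sum>i\<in>I n. F (f (x n i))) / real (card (I n)))
    \<longlonglongrightarrow> (integral\<^sup>L lebesgue (\<lambda>y. indicator \<Omega> y * F (f y)) / V) / (measure lebesgue \<Omega> / V)"
    by (rule Lim_transform_eventually)
  then show ?thesis
    using \<open>0 < V\<close> by simp
qed

lemma has_asymp_distr_eventually_nonempty:
  assumes "has_asymp_distr I lam g \<Omega>"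
  shows "eventually (\<lambda>n. I n \<noteq> {}) sequentially"
proof -
  have "eventually (\<lambda>n. 1 \<le> card (I n)) sequentially"
    using assms unfolding has_asymp_distr_def filterlim_at_top by blast
  then show ?thesis
    by (rule eventually_mono) auto
qed

text \<open>The complex test function \<open>z \<mapsto> trap lo hi r (Re z) * trap 0 0 1 (Im z)\<close> has bounded
  support and agrees with \<open>trap lo hi r\<close> on the real axis.\<close>
lemma has_asymp_distr_trap_tendsto:
  fixes \<Omega> :: "'a::euclidean_space set" and f :: "'a \<Rightarrow> real" and lam :: "nat \<Rightarrow> 'i \<Rightarrow> real"
  assumes distr: "has_asymp_distr I (\<lambda>n i. complex_of_real (lam n i)) (\<lambda>y. complex_of_real (f y)) \<Omega>"
    and "0 < r"
  shows "(\<lambda>n. (\<Sum>i\<in>I n. trap lo hi r (lam n i)) / real (card (I n)))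
    \<longlonglongrightarrow> integral\<^sup>L lebesgue (\<lambda>y. indicator \<Omega> y * trap lo hi r (f y)) / measure lebesgue \<Omega>"
proof -
  define G where "G z = complex_of_real (trap lo hi r (Re z) * trap 0 0 1 (Im z))" for z
  have "continuous_on UNIV G"
    unfolding G_def using \<open>0 < r\<close>
    by (intro continuous_on_of_real continuous_on_mult continuous_on_compose2[OF continuous_on_trap]
        continuous_on_Re continuous_on_Im continuous_on_id) auto
  moreover have "bounded {z. G z \<noteq> 0}"
  proof -
    have "norm z \<le> \<bar>lo\<bar> + \<bar>hi\<bar> + r + 1" if "G z \<noteq> 0" for z
    proof -
      have "trap lo hi r (Re z) \<noteq> 0" "trap 0 0 1 (Im z) \<noteq> 0"
        using that unfolding G_def by auto
      then have "\<not> (Re z \<le> lo - r \<or> hi + r \<le> Re z)" "\<not> (Im z \<le> 0 - 1 \<or> 0 + 1 \<le> Im z)"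
        using trap_eq_zero[OF \<open>0 < r\<close>, of "Re z" lo hi] trap_eq_zero[of 1 "Im z" 0 0] by auto
      then show ?thesis
        using cmod_le[of z] \<open>0 < r\<close> by arith
    qed
    then show ?thesis
      unfolding bounded_iff mem_Collect_eq by blast
  qed
  ultimately have "(\<lambda>n. (\<Sum>i\<in>I n. G (complex_of_real (lam n i))) / of_nat (card (I n)))
      \<longlonglongrightarrow> set_lebesgue_integral lebesgue \<Omega> (\<lambda>y. G (complex_of_real (f y))) / of_real (measure lebesgue \<Omega>)"
    using distr unfolding has_asymp_distr_def by blast
  moreover have "trap 0 0 1 0 = 1"
    by (rule trap_eq_one) auto
  then have "(\<Sum>i\<in>I n. G (complex_of_real (lam n i))) / of_nat (card (I n))
      = complex_of_real ((\<Sum>i\<in>I n. trap lo hi r (lam n i)) / real (card (I n)))" for n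
    unfolding G_def by simp
  moreover have "set_lebesgue_integral lebesgue \<Omega> (\<lambda>y. G (complex_of_real (f y)))
      = integral\<^sup>L lebesgue (\<lambda>y. complex_of_real (indicator \<Omega> y * trap lo hi r (f y)))"
    unfolding set_lebesgue_integral_def G_def using \<open>trap 0 0 1 0 = 1\<close>
    by (intro Bochner_Integration.integral_cong) (auto simp: indicator_def)
  then have "set_lebesgue_integral lebesgue \<Omega> (\<lambda>y. G (complex_of_real (f y))) / of_real (measure lebesgue \<Omega>)
      = complex_of_real (integral\<^sup>L lebesgue (\<lambda>y. indicator \<Omega> y * trap lo hi r (f y)) / measure lebesgue \<Omega>)"
    by (simp only: integral_complex_of_real of_real_divide)
  ultimately show ?thesis
    by (simp only: tendsto_of_real_iff)
qed

lemma integral_indicator_comp_strict_mono: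
  fixes f :: "'a::euclidean_space \<Rightarrow> real" and G H :: "real \<Rightarrow> real"
  assumes "\<Omega> \<in> lmeasurable"
    and G_int: "integrable lebesgue (\<lambda>y. indicator \<Omega> y * G (f y))"
    and H_int: "integrable lebesgue (\<lambda>y. indicator \<Omega> y * H (f y))"
    and G_le_H: "\<And>t. G t \<le> H t"
    and gap: "\<And>t. \<bar>t - c\<bar> < e \<Longrightarrow> G t + \<eta> \<le> H t"
    and "0 < e" "0 < \<eta>" and c: "c \<in> ess_range \<Omega> f"
  shows "integral\<^sup>L lebesgue (\<lambda>y. indicator \<Omega> y * G (f y)) < integral\<^sup>L lebesgue (\<lambda>y. indicator \<Omega> y * H (f y))"
proof -
  define E where "E = {y \<in> \<Omega>. \<bar>f y - c\<bar> < e}"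
  have "0 < emeasure lebesgue E"
    using c \<open>0 < e\<close> unfolding ess_range_def E_def by simp
  then have "E \<in> sets lebesgue"
    using emeasure_notin_sets[of E lebesgue] by (cases "E \<in> sets lebesgue") auto
  moreover have "E \<subseteq> \<Omega>"
    unfolding E_def by blast
  ultimately have E: "E \<in> lmeasurable"
    using \<open>\<Omega> \<in> lmeasurable\<close> fmeasurableI2 by blast
  then have "0 < measure lebesgue E"
    using \<open>0 < emeasure lebesgue E\<close> emeasure_eq_measure2[OF E] by simp
  have "integral\<^sup>L lebesgue (\<lambda>y. \<eta> * indicator E y)
      \<le> integral\<^sup>L lebesgue (\<lambda>y. indicator \<Omega> y * H (f y) - indicator \<Omega> y * G (f y))"
  proof (rule integral_mono)
    show "integrable lebesgue (\<lambda>y. \<eta> * indicator E y)"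
      using fmeasurableD[OF E] less_top[THEN iffD1, OF fmeasurableD2[OF E]]
      by (intro integrable_mult_right integrable_real_indicator) auto
    show "integrable lebesgue (\<lambda>y. indicator \<Omega> y * H (f y) - indicator \<Omega> y * G (f y))"
      using H_int G_int by (rule Bochner_Integration.integrable_diff)
    show "\<eta> * indicator E y \<le> indicator \<Omega> y * H (f y) - indicator \<Omega> y * G (f y)" for y
      using G_le_H[of "f y"] gap[of "f y"] by (auto simp: indicator_def E_def)
  qed
  also have "\<dots> = integral\<^sup>L lebesgue (\<lambda>y. indicator \<Omega> y * H (f y)) - integral\<^sup>L lebesgue (\<lambda>y. indicator \<Omega> y * G (f y))"
    using H_int G_int by (rule Bochner_Integration.integral_diff)
  finally have "\<eta> * measure lebesgue E
      \<le> integral\<^sup>L lebesgue (\<lambda>y. indicator \<Omega> y * H (f y)) - integral\<^sup>L lebesgue (\<lambda>y. indicator \<Omega> y * G (f y))"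
    by simp
  moreover have "0 < \<eta> * measure lebesgue E"
    using \<open>0 < \<eta>\<close> \<open>0 < measure lebesgue E\<close> by simp
  ultimately show ?thesis
    by simp
qed

lemma trap_integral_gap:
  fixes f :: "'a::euclidean_space \<Rightarrow> real"
  assumes "bounded \<Omega>" "frontier \<Omega> \<in> null_sets lebesgue"
    and f_cont: "AE y in lebesgue. y \<in> \<Omega> \<longrightarrow> continuous (at y within \<Omega>) f"
    and "0 < r" "lo \<le> t" and c: "t + 3*r/4 \<in> ess_range \<Omega> f"
  shows "integral\<^sup>L lebesgue (\<lambda>y. indicator \<Omega> y * trap lo t r (f y))
    < integral\<^sup>L lebesgue (\<lambda>y. indicator \<Omega> y * trap lo (t + r) r (f y))"
proof -
  have \<Omega>: "\<Omega> \<in> lmeasurable"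
    using assms(1,2) measurable_Jordan negligible_iff_null_sets by blast
  have int: "integrable lebesgue (\<lambda>y. indicator \<Omega> y * trap lo t' r (f y))" for t'
    using \<Omega> assms(2,3) continuous_on_trap[OF \<open>0 < r\<close>] abs_trap_le_one by (rule integrable_indicator_comp)
  show ?thesis
  proof (rule integral_indicator_comp_strict_mono[OF \<Omega> int int _ _ _ _ c])
    show "trap lo t r s \<le> trap lo (t + r) r s" for s
      using \<open>0 < r\<close> by (simp add: trap_mono_hi)
    show "trap lo t r s + 1/2 \<le> trap lo (t + r) r s" if "\<bar>s - (t + 3*r/4)\<bar> < r/4" for s
    proof (rule trap_shift_gap)
      show "t + r/2 \<le> s" "s \<le> t + r"
        using that by arith+
    qed (use \<open>0 < r\<close> \<open>lo \<le> t\<close> in auto)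
  qed (use \<open>0 < r\<close> in auto)
qed

lemma sorted_rearrangements_tendsto_0:
  fixes U V :: "nat \<Rightarrow> 'i \<Rightarrow> real" and L :: "(real \<Rightarrow> real) \<Rightarrow> real"
  assumes fin: "\<And>n. finite (I n)"
    and nonempty: "eventually (\<lambda>n. I n \<noteq> {}) sequentially"
    and R_trans: "\<And>i j k. R i j \<Longrightarrow> R j k \<Longrightarrow> R i k"
    and R_irrefl: "\<And>i. \<not> R i i"
    and R_total: "\<And>i j. i \<noteq> j \<Longrightarrow> R i j \<or> R j i"
    and \<epsilon>: "\<epsilon> \<longlonglongrightarrow> 0"
    and U_range: "\<And>n i. i \<in> I n \<Longrightarrow> m - \<epsilon> n \<le> U n i \<and> U n i \<le> M + \<epsilon> n"
    and V_range: "\<And>n i. i \<in> I n \<Longrightarrow> m - \<epsilon> n \<le> V n i \<and> V n i \<le> M + \<epsilon> n"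
    and U_lim: "\<And>lo hi r. 0 < r \<Longrightarrow>
      (\<lambda>n. (\<Sum>i\<in>I n. trap lo hi r (U n i)) / real (card (I n))) \<longlonglongrightarrow> L (trap lo hi r)"
    and V_lim: "\<And>lo hi r. 0 < r \<Longrightarrow>
      (\<lambda>n. (\<Sum>i\<in>I n. trap lo hi r (V n i)) / real (card (I n))) \<longlonglongrightarrow> L (trap lo hi r)"
    and gap: "\<And>lo t r. 0 < r \<Longrightarrow> lo \<le> t \<Longrightarrow> m \<le> t + 3*r/4 \<Longrightarrow> t + 3*r/4 \<le> M \<Longrightarrow>
      L (trap lo t r) < L (trap lo (t + r) r)"
  shows "(\<forall>\<sigma> \<tau>. (\<forall>n. \<sigma> n permutes I n \<and> \<tau> n permutes I n \<and>
        (\<forall>i\<in>I n. \<forall>j\<in>I n. R i j \<longrightarrow> U n (\<sigma> n i) \<le> U n (\<sigma> n j) \<and> V n (\<tau> n i) \<le> V n (\<tau> n j)))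
      \<longrightarrow> (\<lambda>n. Max {\<bar>U n (\<sigma> n i) - V n (\<tau> n i)\<bar> | i. i \<in> I n}) \<longlonglongrightarrow> 0)
    \<and> (\<lambda>n. Min {Max {\<bar>U n i - V n (\<tau> i)\<bar> | i. i \<in> I n} | \<tau>. \<tau> permutes I n}) \<longlonglongrightarrow> 0"
proof
  have R_total': "\<And>n i j. i \<in> I n \<Longrightarrow> j \<in> I n \<Longrightarrow> i \<noteq> j \<Longrightarrow> R i j \<or> R j i"
    using R_total by blast
  show sorted_match: "\<forall>\<sigma> \<tau>. (\<forall>n. \<sigma> n permutes I n \<and> \<tau> n permutes I n \<and>
        (\<forall>i\<in>I n. \<forall>j\<in>I n. R i j \<longrightarrow> U n (\<sigma> n i) \<le> U n (\<sigma> n j) \<and> V n (\<tau> n i) \<le> V n (\<tau> n j)))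
      \<longrightarrow> (\<lambda>n. Max {\<bar>U n (\<sigma> n i) - V n (\<tau> n i)\<bar> | i. i \<in> I n}) \<longlonglongrightarrow> 0"
  proof (intro allI impI)
    fix \<sigma> \<tau>
    assume "\<forall>n. \<sigma> n permutes I n \<and> \<tau> n permutes I n \<and>
      (\<forall>i\<in>I n. \<forall>j\<in>I n. R i j \<longrightarrow> U n (\<sigma> n i) \<le> U n (\<sigma> n j) \<and> V n (\<tau> n i) \<le> V n (\<tau> n j))"
    then show "(\<lambda>n. Max {\<bar>U n (\<sigma> n i) - V n (\<tau> n i)\<bar> | i. i \<in> I n}) \<longlonglongrightarrow> 0"
      by (intro sorted_rearrangement_max_dist_tendsto_0[where I=I and R=R and L=L,
            OF fin nonempty R_irrefl R_total' \<epsilon> U_range V_range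
            U_lim V_lim gap]) auto
  qed
  show "(\<lambda>n. Min {Max {\<bar>U n i - V n (\<tau> i)\<bar> | i. i \<in> I n} | \<tau>. \<tau> permutes I n}) \<longlonglongrightarrow> 0"
    by (rule min_rearrangement_max_dist_tendsto_0[where I=I and R=R and U=U and V=V,
        OF fin nonempty R_trans R_irrefl R_total' sorted_match])
qed

theorem theorem2p1:
  fixes \<Omega> :: "(real^('d::{finite,wellorder})) set"
    and f :: "real^('d::{finite,wellorder}) \<Rightarrow> real"
    and a b :: "real^('d::{finite,wellorder})"
    and N :: "nat \<Rightarrow> (('d::{finite,wellorder}) \<Rightarrow> nat)"
    and x :: "nat \<Rightarrow> (('d::{finite,wellorder}) \<Rightarrow> nat) \<Rightarrow> real^('d::{finite,wellorder})"
    and lam :: "nat \<Rightarrow> (('d::{finite,wellorder}) \<Rightarrow> nat) \<Rightarrow> real"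
    and I :: "nat \<Rightarrow> (('d::{finite,wellorder}) \<Rightarrow> nat) set"
  assumes regular: "bounded \<Omega>" "frontier \<Omega> \<in> null_sets lebesgue"
    and pos: "measure lebesgue \<Omega> > 0"
    and f_bdd: "bounded (f ` \<Omega>)"
    and f_cont: "AE y in lebesgue. y \<in> \<Omega> \<longrightarrow> continuous (at y within \<Omega>) f"
    and f_ER: "ess_range \<Omega> f = {Inf (f ` \<Omega>) .. Sup (f ` \<Omega>)}"
    and rect: "\<Omega> \<subseteq> cbox a b"
    and N_inf: "filterlim (\<lambda>n. Min (range (N n))) at_top sequentially"
    and grid: "au_grid x a b N"
    and I_def: "\<And>n. I n = {i \<in> multi_range (N n). x n i \<in> \<Omega>}"
    and distr: "has_asymp_distr I (\<lambda>n i. complex_of_real (lam n i)) (\<lambda>y. complex_of_real (f y)) \<Omega>"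
    and eps: "\<exists>\<epsilon> :: nat \<Rightarrow> real. \<epsilon> \<longlonglongrightarrow> 0 \<and>
               (\<forall>n. \<forall>i\<in>I n. lam n i \<in> {Inf (f ` \<Omega>) - \<epsilon> n .. Sup (f ` \<Omega>) + \<epsilon> n})"
  shows "(\<forall>\<sigma> \<tau>. (\<forall>n. \<sigma> n permutes I n \<and> \<tau> n permutes I n \<and>
              (\<forall>i\<in>I n. \<forall>j\<in>I n. lex_less i j \<longrightarrow>
                  f (x n (\<sigma> n i)) \<le> f (x n (\<sigma> n j)) \<and> lam n (\<tau> n i) \<le> lam n (\<tau> n j)))
           \<longrightarrow> (\<lambda>n. Max {\<bar>f (x n (\<sigma> n i)) - lam n (\<tau> n i)\<bar> | i. i \<in> I n}) \<longlonglongrightarrow> 0)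
       \<and> (\<lambda>n. Min {Max {\<bar>f (x n i) - lam n (\<tau> i)\<bar> | i. i \<in> I n} | \<tau>. \<tau> permutes I n})
           \<longlonglongrightarrow> 0"
proof -
  obtain \<epsilon> where \<epsilon>: "\<epsilon> \<longlonglongrightarrow> 0"
    and lam_range: "\<forall>n. \<forall>i\<in>I n. lam n i \<in> {Inf (f ` \<Omega>) - \<epsilon> n .. Sup (f ` \<Omega>) + \<epsilon> n}"
    using eps by blast
  define L where "L F = integral\<^sup>L lebesgue (\<lambda>y. indicator \<Omega> y * F (f y)) / measure lebesgue \<Omega>" for F
  have fin: "\<And>n. finite (I n)"
    using distr by (simp add: has_asymp_distr_def)
  have gap: "L (trap lo t r) < L (trap lo (t + r) r)"
    if "0 < r" "lo \<le> t" "Inf (f ` \<Omega>) \<le> t + 3*r/4" "t + 3*r/4 \<le> Sup (f ` \<Omega>)" for lo t r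
    unfolding L_def using trap_integral_gap[OF regular f_cont that(1,2)] that(3,4) f_ER pos
    by (intro divide_strict_right_mono) auto
  have samples: "(\<lambda>n. (\<Sum>i\<in>I n. trap lo hi r (f (x n i))) / real (card (I n))) \<longlonglongrightarrow> L (trap lo hi r)"
    if "0 < r" for lo hi r
    unfolding L_def using N_inf grid I_def regular(2) f_cont rect pos continuous_on_trap[OF that] abs_trap_le_one
    by (rule sample_mean_tendsto)
  have spectrum: "(\<lambda>n. (\<Sum>i\<in>I n. trap lo hi r (lam n i)) / real (card (I n))) \<longlonglongrightarrow> L (trap lo hi r)"
    if "0 < r" for lo hi r
    unfolding L_def using distr that by (rule has_asymp_distr_trap_tendsto)
  show ?thesis
  proof (rule sorted_rearrangements_tendsto_0[where I=I and U="\<lambda>n i. f (x n i)" and V=lam and R=lex_less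
        and \<epsilon>="\<lambda>n. \<bar>\<epsilon> n\<bar>" and m="Inf (f ` \<Omega>)" and M="Sup (f ` \<Omega>)" and L=L,
        OF fin has_asymp_distr_eventually_nonempty[OF distr] lex_less_trans lex_less_irrefl lex_less_total
          tendsto_rabs_zero[OF \<epsilon>] _ _ samples spectrum gap])
    show "Inf (f ` \<Omega>) - \<bar>\<epsilon> n\<bar> \<le> f (x n i) \<and> f (x n i) \<le> Sup (f ` \<Omega>) + \<bar>\<epsilon> n\<bar>" if "i \<in> I n" for n i
      using bounded_image_Inf_Sup_bounds[OF f_bdd, of "x n i"] abs_ge_zero[of "\<epsilon> n"] that I_def
      by fastforce
    show "Inf (f ` \<Omega>) - \<bar>\<epsilon> n\<bar> \<le> lam n i \<and> lam n i \<le> Sup (f ` \<Omega>) + \<bar>\<epsilon> n\<bar>" if "i \<in> I n" for n i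
      using lam_range that by fastforce
  qed
qed

end
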